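(* Let $f\in\mathcal{S}(\Omega)$ be tame and suppose $\Omega':=\Omega\setminus V(N(f))$ is not empty. Then $f$ belongs to the central cone $C_{\mathcal{S}(\Omega')}$. In particular, $f$ is invertible in $\mathcal{S}(\Omega')$, its multiplicative inverse can be computed as \[f^{-\bullet}(x)=(N(f)^{-\bullet}\cdot f^c)(x)=(N(f)(x))^{-1}f^c(x),\] and, when $\Omega'$ is open, $f^{-\bullet}$ is slice regular if and only if $f$ is slice regular in $\Omega'$. Furthermore, the associator $(f,f^c,g)$ (computed with the slice product) vanishes for all $g\in\mathcal{S}(\Omega')$, and \[N(f\cdot g)=N(f)N(g)=N(g)\cdot N(f)=N(g\cdot f)\] for all $g\in C_{\mathcal{S}(\Omega')}$. In particular, for any tame $g\in\mathcal{S}(\Omega')$, the slice product $f\cdot g$ is a tame element of $\mathcal{S}(\Omega'')$ with $\Omega'':=\Omega'\setminus V(N(g))$, provided $\Omega''$ is not empty.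
   Context: Let $A$ be a finite-dimensional real algebra with unit $1$ ($\mathbb{R}$ identified with $\mathbb{R}1$) which is alternative (the associator $(x,y,z)=(xy)z-x(yz)$ is alternating), with a $^*$-involution $x\mapsto x^c$ (real linear, $(x^c)^c=x$, $(xy)^c=y^cx^c$, $r^c=r$ for $r\in\mathbb{R}$). Let $t(x)=x+x^c$, $n(x)=xx^c$, $\mathbb{S}_A=\{J\in A:t(J)=0,n(J)=1\}$ (assumed non-empty), $Q_A=\mathbb{R}\cup\{x\in A:t(x),n(x)\in\mathbb{R},\ 4n(x)>t(x)^2\}$; every $x\in Q_A$ is $\alpha+\beta J$ with $\alpha,\beta\in\mathbb{R}$, $J\in\mathbb{S}_A$. Let $D\subseteq\mathbb{C}$ be non-empty and invariant under complex conjugation and $\Omega=\{\alpha+\beta J:\alpha+i\beta\in D,\ J\in\mathbb{S}_A\}$. Let $A_{\mathbb{C}}=\{a+\imath b:a,b\in A\}$ with product $(a+\imath b)(a'+\imath b')=aa'-bb'+\imath(ab'+ba')$, conjugation $\overline{a+\imath b}=a-\imath b$, involution $(a+\imath b)^c=a^c+\imath b^c$. A stem function is $F=F_1+\imath F_2:D\to A_{\mathbb{C}}$ with $F(\bar z)=\overline{F(z)}$; it induces the slice function $f=\mathcal{I}(F)$, $f(\alpha+\beta J)=F_1(\alpha+i\beta)+JF_2(\alpha+i\beta)$. $\mathcal{S}(\Omega)$ is the real alternative $^*$-algebra of slice functions on $\Omega$ with pointwise sum, slice product $f\cdot g=\mathcal{I}(FG)$, conjugate $f^c=\mathcal{I}(F^c)$,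 $F^c(z)=F(z)^c$, and normal function $N(f)=f\cdot f^c$. $f$ is slice preserving if $F_1,F_2$ are real valued; $f$ is tame if $N(f)$ is slice preserving and $N(f)=N(f^c)$. $V(h)=\{x:h(x)=0\}$. Restrictions to sets $\Omega'\subseteq\Omega$ of the same circular form are denoted by the same letter, and $h^{-\bullet}$ denotes the multiplicative inverse in the corresponding algebra of slice functions. For a real alternative $^*$-algebra $B$ (here $B=\mathcal{S}(\Omega')$, with norm $h\mapsto N(h)$), the center is the set of $r$ with $(r,x,y)=0$, $rx=xr$ for all $x,y\in B$, and the central cone is $C_B=\{0\}\cup\{x\in B: N(x),N(x^c)$ are invertible elements of the center of $B\}$. When $D$ is open, $f=\mathcal{I}(F)$ is slice regular if $F$ is of class $\mathscr{C}^1$ and $\frac12\big(\frac{\partial F}{\partial\alpha}+\imath\frac{\partial F}{\partial\beta}\big)\equiv0$. *)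

theory Defs
  imports "HOL-Analysis.Analysis"
begin

text \<open>The algebra A is a finite-dimensional real vector space (type class euclidean_space)
with a bilinear product mul, unit one (with the reals identified with the line through one,
so one is nonzero), and a *-involution cj.\<close>

definition assoc :: "('a::real_vector \<Rightarrow> 'a \<Rightarrow> 'a) \<Rightarrow> 'a \<Rightarrow> 'a \<Rightarrow> 'a \<Rightarrow> 'a" where
  "assoc mul x y z = mul (mul x y) z - mul x (mul y z)"

definition alt_star_alg :: "('a::euclidean_space \<Rightarrow> 'a \<Rightarrow> 'a) \<Rightarrow> ('a \<Rightarrow> 'a) \<Rightarrow> 'a \<Rightarrow> bool" where
  "alt_star_alg mul cj one \<longleftrightarrow>
     bilinear mul \<and> one \<noteq> 0 \<and> (\<forall>x. mul one x = x \<and> mul x one = x)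
     \<and> (\<forall>x y. assoc mul x x y = 0 \<and> assoc mul x y x = 0 \<and> assoc mul y x x = 0)
     \<and> linear cj \<and> (\<forall>x. cj (cj x) = x) \<and> (\<forall>x y. cj (mul x y) = mul (cj y) (cj x))
     \<and> (\<forall>r. cj (r *\<^sub>R one) = r *\<^sub>R one)"

definition center :: "'b set \<Rightarrow> ('b \<Rightarrow> 'b \<Rightarrow> 'b) \<Rightarrow> 'b set" where
  "center B m = {r \<in> B. \<forall>x\<in>B. \<forall>y\<in>B. m (m r x) y = m r (m x y) \<and> m r x = m x r}"

definition invertible_in :: "'b set \<Rightarrow> ('b \<Rightarrow> 'b \<Rightarrow> 'b) \<Rightarrow> 'b \<Rightarrow> 'b \<Rightarrow> bool" where
  "invertible_in B m e x \<longleftrightarrow> x \<in> B \<and> (\<exists>y\<in>B. m x y = e \<and> m y x = e)"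

definition inverse_in :: "'b set \<Rightarrow> ('b \<Rightarrow> 'b \<Rightarrow> 'b) \<Rightarrow> 'b \<Rightarrow> 'b \<Rightarrow> 'b" where
  "inverse_in B m e x = (SOME y. y \<in> B \<and> m x y = e \<and> m y x = e)"

definition central_cone :: "'b set \<Rightarrow> ('b \<Rightarrow> 'b \<Rightarrow> 'b) \<Rightarrow> ('b \<Rightarrow> 'b) \<Rightarrow> 'b \<Rightarrow> 'b \<Rightarrow> 'b set" where
  "central_cone B m c e z = {z} \<union> {x \<in> B.
      m x (c x) \<in> center B m \<and> invertible_in B m e (m x (c x)) \<and>
      m (c x) (c (c x)) \<in> center B m \<and> invertible_in B m e (m (c x) (c (c x)))}"

locale salg =
  fixes mul :: "'a::euclidean_space \<Rightarrow> 'a \<Rightarrow> 'a" and cj :: "'a \<Rightarrow> 'a" and one :: 'a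
begin

definition tr :: "'a \<Rightarrow> 'a" where "tr x = x + cj x"
definition nrm :: "'a \<Rightarrow> 'a" where "nrm x = mul x (cj x)"
definition sph :: "'a set" where "sph = {J. tr J = 0 \<and> nrm J = one}"
definition reals_A :: "'a set" where "reals_A = range (\<lambda>r. r *\<^sub>R one)"

definition pt :: "complex \<Rightarrow> 'a \<Rightarrow> 'a" where "pt z J = Re z *\<^sub>R one + Im z *\<^sub>R J"

definition circ :: "complex set \<Rightarrow> 'a set" where
  "circ D = {pt z J | z J. z \<in> D \<and> J \<in> sph}"

text \<open>the domain D in C of a circular set W (so that circ (sdom W) = W for circular W)\<close>
definition sdom :: "'a set \<Rightarrow> complex set" where
  "sdom W = {z. \<exists>J\<in>sph. pt z J \<in> W}"

text \<open>A_C is modelled as 'a \<times> 'a, (a,b) standing for a + i b\<close>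
definition cmul :: "'a \<times> 'a \<Rightarrow> 'a \<times> 'a \<Rightarrow> 'a \<times> 'a" where
  "cmul p q = (mul (fst p) (fst q) - mul (snd p) (snd q), mul (fst p) (snd q) + mul (snd p) (fst q))"
definition ccj :: "'a \<times> 'a \<Rightarrow> 'a \<times> 'a" where "ccj p = (cj (fst p), cj (snd p))"
definition imul :: "'a \<times> 'a \<Rightarrow> 'a \<times> 'a" where "imul p = (- snd p, fst p)"

definition stem :: "'a set \<Rightarrow> (complex \<Rightarrow> 'a \<times> 'a) \<Rightarrow> bool" where
  "stem W F \<longleftrightarrow> (\<forall>z\<in>sdom W. F (cnj z) = (fst (F z), - snd (F z)))"

definition induced :: "'a set \<Rightarrow> (complex \<Rightarrow> 'a \<times> 'a) \<Rightarrow> 'a \<Rightarrow> 'a" where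
  "induced W F = (\<lambda>x. if x \<in> W then
      (SOME v. \<exists>z J. J \<in> sph \<and> x = pt z J \<and> v = fst (F z) + mul J (snd (F z))) else 0)"

definition SF :: "'a set \<Rightarrow> ('a \<Rightarrow> 'a) set" where
  "SF W = {induced W F | F. stem W F}"

definition stem_of :: "'a set \<Rightarrow> ('a \<Rightarrow> 'a) \<Rightarrow> complex \<Rightarrow> 'a \<times> 'a" where
  "stem_of W f = (SOME F. stem W F \<and> f = induced W F)"

definition sprod :: "'a set \<Rightarrow> ('a \<Rightarrow> 'a) \<Rightarrow> ('a \<Rightarrow> 'a) \<Rightarrow> 'a \<Rightarrow> 'a" where
  "sprod W f g = induced W (\<lambda>z. cmul (stem_of W f z) (stem_of W g z))"

definition sconj :: "'a set \<Rightarrow> ('a \<Rightarrow> 'a) \<Rightarrow> 'a \<Rightarrow> 'a" where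
  "sconj W f = induced W (\<lambda>z. ccj (stem_of W f z))"

definition sone :: "'a set \<Rightarrow> 'a \<Rightarrow> 'a" where
  "sone W = induced W (\<lambda>z. (one, 0))"

definition sN :: "'a set \<Rightarrow> ('a \<Rightarrow> 'a) \<Rightarrow> 'a \<Rightarrow> 'a" where
  "sN W f = sprod W f (sconj W f)"

definition slice_pres :: "'a set \<Rightarrow> ('a \<Rightarrow> 'a) \<Rightarrow> bool" where
  "slice_pres W f \<longleftrightarrow> f \<in> SF W \<and>
     (\<forall>z\<in>sdom W. fst (stem_of W f z) \<in> reals_A \<and> snd (stem_of W f z) \<in> reals_A)"

definition tame :: "'a set \<Rightarrow> ('a \<Rightarrow> 'a) \<Rightarrow> bool" where
  "tame W f \<longleftrightarrow> f \<in> SF W \<and> slice_pres W (sN W f) \<and> sN W f = sN W (sconj W f)"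

definition zeros :: "'a set \<Rightarrow> ('a \<Rightarrow> 'a) \<Rightarrow> 'a set" where
  "zeros W h = {x \<in> W. h x = 0}"

definition restr :: "'a set \<Rightarrow> ('a \<Rightarrow> 'a) \<Rightarrow> 'a \<Rightarrow> 'a" where
  "restr W f = (\<lambda>x. if x \<in> W then f x else 0)"

definition ainv :: "'a \<Rightarrow> 'a" where
  "ainv a = (SOME b. mul a b = one \<and> mul b a = one)"

text \<open>slice regularity: the stem function is C^1 (differentiable with continuous partial
derivatives in alpha and beta) and satisfies the Cauchy-Riemann equation in A_C\<close>
definition slice_regular :: "'a set \<Rightarrow> ('a \<Rightarrow> 'a) \<Rightarrow> bool" where
  "slice_regular W f \<longleftrightarrow> f \<in> SF W \<and>
     (let F = stem_of W f in
       (\<forall>z\<in>sdom W. F differentiable (at z)) \<and>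
       continuous_on (sdom W) (\<lambda>z. frechet_derivative F (at z) 1) \<and>
       continuous_on (sdom W) (\<lambda>z. frechet_derivative F (at z) \<i>) \<and>
       (\<forall>z\<in>sdom W. (1/2) *\<^sub>R (frechet_derivative F (at z) 1 + imul (frechet_derivative F (at z) \<i>)) = 0))"

end

end

theory Submission
  imports Defs
begin

text \<open>Everything is reduced pointwise to stems, i.e. to the complexified algebra
  \<open>A\<^sub>\<complex> = A \<times> A\<close>, which is again alternative. Tameness of \<open>f = \<I>(F)\<close> says that
  \<open>F F\<^sup>c = F\<^sup>c F\<close> is a complex scalar \<open>\<lambda>\<close>, hence central in \<open>A\<^sub>\<complex>\<close>, and \<open>\<Omega>'\<close> is where
  \<open>\<lambda> \<noteq> 0\<close>. There \<open>\<lambda>\<^sup>-\<^sup>1 F\<^sup>c\<close> is a two-sided inverse of \<open>F\<close>, and the standard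
  alternative-algebra facts (an invertible element associates with its inverse, by the
  Moufang identity; \<open>(xy)(y\<^sup>c x\<^sup>c) = (x x\<^sup>c)(y y\<^sup>c)\<close> when both norms are central and
  invertible) yield the associator and norm identities. Regularity transfers because
  conjugation, products and inverses of nonvanishing complex scalars preserve the
  Cauchy--Riemann equation of stems.\<close>

section \<open>Alternative algebras\<close>

lemma real_vector_eq_neg_self: "(a::'v::real_vector) = - a \<Longrightarrow> a = 0"
proof -
  assume "a = - a"
  hence "(2::real) *\<^sub>R a = 0" by (metis add.right_inverse scaleR_2)
  thus "a = 0" by simp
qed

lemma real_vector_double_cancel: "(a::'v::real_vector) + a = b + b \<Longrightarrow> a = b"
proof -
  assume "a + a = b + b"
  hence "(2::real) *\<^sub>R a = (2::real) *\<^sub>R b" by (simp add: scaleR_2)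
  thus "a = b" by simp
qed

locale alt_algebra =
  fixes m :: "'v::real_vector \<Rightarrow> 'v \<Rightarrow> 'v" and e :: 'v
  assumes mult_bilinear: "bilinear m"
    and unit_left: "m e x = x" and unit_right: "m x e = x"
    and left_alternative: "assoc m x x y = 0" and right_alternative: "assoc m y x x = 0"
begin

lemma mult_ladd: "m (x + y) z = m x z + m y z" using mult_bilinear by (rule bilinear_ladd)
lemma mult_radd: "m x (y + z) = m x y + m x z" using mult_bilinear by (rule bilinear_radd)
lemma mult_lsub: "m (x - y) z = m x z - m y z" using mult_bilinear by (rule bilinear_lsub)
lemma mult_rsub: "m x (y - z) = m x y - m x z" using mult_bilinear by (rule bilinear_rsub)
lemma mult_lneg: "m (- x) z = - m x z" using mult_bilinear by (rule bilinear_lneg)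
lemma mult_rneg: "m x (- z) = - m x z" using mult_bilinear by (rule bilinear_rneg)
lemma mult_lscale: "m (c *\<^sub>R x) z = c *\<^sub>R m x z" using mult_bilinear by (rule bilinear_lmul)
lemma mult_rscale: "m x (c *\<^sub>R z) = c *\<^sub>R m x z" using mult_bilinear by (rule bilinear_rmul)
lemma mult_lzero: "m 0 z = 0" using mult_bilinear by (rule bilinear_lzero)
lemma mult_rzero: "m x 0 = 0" using mult_bilinear by (rule bilinear_rzero)

lemmas mult_linear =
  mult_ladd mult_radd mult_lsub mult_rsub mult_lneg mult_rneg mult_lscale mult_rscale mult_lzero mult_rzero

lemma assoc_add:
  "assoc m (x + y) z w = assoc m x z w + assoc m y z w"
  "assoc m z (x + y) w = assoc m z x w + assoc m z y w"
  "assoc m z w (x + y) = assoc m z w x + assoc m z w y"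
  by (simp_all add: assoc_def mult_linear)

lemma assoc_unit_left: "assoc m e x y = 0"
  by (simp add: assoc_def unit_left)

lemma assoc_swap_left: "assoc m x y z = - assoc m y x z"
proof -
  have "0 = assoc m (x + y) (x + y) z" by (rule left_alternative[symmetric])
  also have "\<dots> = assoc m x y z + assoc m y x z"
    unfolding assoc_add by (simp add: left_alternative)
  finally show ?thesis by (simp add: eq_neg_iff_add_eq_0)
qed

lemma assoc_swap_right: "assoc m x y z = - assoc m x z y"
proof -
  have "0 = assoc m x (y + z) (y + z)" by (rule right_alternative[symmetric])
  also have "\<dots> = assoc m x y z + assoc m x z y"
    unfolding assoc_add by (simp add: right_alternative)
  finally show ?thesis by (simp add: eq_neg_iff_add_eq_0 add.commute)
qed

lemma assoc_cycle: "assoc m x y z = assoc m y z x"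
  by (metis assoc_swap_left assoc_swap_right minus_minus)

lemma assoc_flexible: "assoc m x y x = 0"
  by (metis assoc_swap_left right_alternative minus_zero)

lemma teichmueller_identity:
  "assoc m (m w x) y z - assoc m w (m x y) z + assoc m w x (m y z)
     = m w (assoc m x y z) + m (assoc m w x y) z"
  by (simp add: assoc_def mult_linear algebra_simps)

definition kleinfeld :: "'v \<Rightarrow> 'v \<Rightarrow> 'v \<Rightarrow> 'v \<Rightarrow> 'v" where
  "kleinfeld w x y z = assoc m (m w x) y z - m x (assoc m w y z) - m (assoc m x y z) w"

text \<open>Adding the Teichmueller identity at \<open>(a,b,c,d)\<close>, \<open>(a,c,b,d)\<close> and \<open>(b,c,d,a)\<close> and
  subtracting it at \<open>(b,d,a,c)\<close> leaves, modulo the alternating law, exactly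
  \<open>kleinfeld a b c d + kleinfeld c b a d\<close>.\<close>

lemma kleinfeld_skew: "kleinfeld c b a d = - kleinfeld a b c d"
proof -
  note L = assoc_swap_left and R = assoc_swap_right and Cy = assoc_cycle
  have "kleinfeld a b c d + kleinfeld c b a d =
      (assoc m (m a b) c d - assoc m a (m b c) d + assoc m a b (m c d)
        - (m a (assoc m b c d) + m (assoc m a b c) d))
    + (assoc m (m a c) b d - assoc m a (m c b) d + assoc m a c (m b d)
        - (m a (assoc m c b d) + m (assoc m a c b) d))
    + (assoc m (m b c) d a - assoc m b (m c d) a + assoc m b c (m d a)
        - (m b (assoc m c d a) + m (assoc m b c d) a))
    - (assoc m (m b d) a c - assoc m b (m d a) c + assoc m b d (m a c)
        - (m b (assoc m d a c) + m (assoc m b d a) c))"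
    unfolding kleinfeld_def
    by (simp only: R[of "m b c" d a] L[of a "m b c" d] L[of a "m c b" d] L[of b "m d a" c]
        Cy[of b "m c d" a] Cy[of "m c d" a b] Cy[of "m b d" a c] Cy[of "m d a" b c] Cy[of "m a c" b d]
        R[of a c b] L[of b a d] L[of c b d] L[of c a d] mult_lneg mult_rneg
        Cy[of a b d] Cy[of a c d] Cy[of c d a])
       (simp add: algebra_simps)
  also have "\<dots> = 0" unfolding teichmueller_identity by simp
  finally show ?thesis by (simp add: eq_neg_iff_add_eq_0 add.commute)
qed

lemma kleinfeld_repeat: "kleinfeld x y x z = 0"
  using kleinfeld_skew[of x y x z] by (intro real_vector_eq_neg_self) simp

lemma moufang_left: "m (m (m x y) x) z = m x (m y (m x z))"
proof -
  have 1: "assoc m (m x y) x z = m (assoc m y x z) x"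
    using kleinfeld_repeat[of x y z] by (simp add: kleinfeld_def left_alternative mult_linear)
  have 2: "assoc m (m x z) x y = m (assoc m z x y) x"
    using kleinfeld_repeat[of x z y] by (simp add: kleinfeld_def left_alternative mult_linear)
  have "m (m (m x y) x) z - m x (m y (m x z)) = assoc m (m x y) x z + assoc m x y (m x z)"
    by (simp add: assoc_def)
  also have "\<dots> = 0"
    using 1 2 assoc_cycle[of "m x z" x y] assoc_cycle[of z x y] assoc_swap_left[of x y z]
      assoc_cycle[of x y z]
    by (simp add: mult_linear)
  finally show ?thesis by simp
qed

lemma assoc_inverse:
  assumes "m x y = e" "m y x = e"
  shows "assoc m x y z = 0"
proof -
  have xyx: "m x (m y (m x w)) = m x w" for w
    using moufang_left[of x y w] assms by (simp add: unit_left)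
  have yxy: "m y (m x (m y w)) = m y w" for w
    using moufang_left[of y x w] assms by (simp add: unit_left)
  have sum: "m x (m y w) + m y (m x w) = w + w" for w
    using assoc_swap_left[of x y w] assms by (simp add: assoc_def unit_left algebra_simps)
  define q where "q = m y (m x z)"
  have p: "m x (m y z) = z + z - q" using sum[of z] unfolding q_def by (simp add: algebra_simps)
  have "m x (m y (z + z - q)) = z + z - q" using xyx[of "m y z"] by (simp add: p)
  hence "(z + z - q) + (z + z - q) - (q + q - m y (m x q)) = z + z - q"
    using sum[of q] p by (simp add: mult_linear algebra_simps)
  hence "z + z = q + q" using yxy[of "m x z"] unfolding q_def by (simp add: algebra_simps)
  hence "q = z" by (metis real_vector_double_cancel)
  hence "assoc m y x z = 0" using assms by (simp add: assoc_def q_def unit_left)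
  thus ?thesis using assoc_swap_left[of y x z] by simp
qed

lemma inverse_unique:
  assumes "m x x' = e" "m x' x = e" "m x y = e"
  shows "y = x'"
  using assoc_inverse[of x' x y] assms by (simp add: assoc_def unit_left unit_right)

lemma mult_inverses:
  assumes x: "m x x' = e" "m x' x = e" and y: "m y y' = e" "m y' y = e"
  shows "m (m x y) (m y' x') = e"
proof -
  have "assoc m w y' y = 0" for w
    using assoc_inverse[OF y(2,1), of w] assoc_cycle[of w y' y] by simp
  hence "kleinfeld x x' y' y = 0"
    using x by (simp add: kleinfeld_def assoc_unit_left mult_linear)
  hence "kleinfeld y' x' x y = 0" using kleinfeld_skew[of x x' y' y] by simp
  hence "assoc m (m y' x') x y = 0"
    using assoc_inverse[OF x(2,1)] assoc_inverse[OF y(2,1), of x] assoc_swap_left[of x y' y]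
      assoc_cycle[of x y' y]
    by (simp add: kleinfeld_def mult_linear)
  hence "m (m x y) (m y' x') = m x (m y (m y' x'))"
    using assoc_cycle[of "m y' x'" x y] by (simp add: assoc_def)
  also have "m y (m y' x') = x'"
    using assoc_inverse[OF y, of x'] y by (simp add: assoc_def unit_left)
  finally show ?thesis using x by simp
qed

text \<open>The nucleus intersected with the commutant; by the alternating law one associator
  condition suffices.\<close>

definition central :: "'v \<Rightarrow> bool" where
  "central s \<longleftrightarrow> (\<forall>p q. assoc m s p q = 0) \<and> (\<forall>p. m s p = m p s)"

context
  fixes s assumes s: "central s"
begin

lemma central_commute: "m s p = m p s"
  using s by (simp add: central_def)

lemma central_assoc: "assoc m s p q = 0" "assoc m p s q = 0" "assoc m p q s = 0"
  using s assoc_swap_left[of s p q] assoc_cycle[of s p q] by (simp_all add: central_def)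

lemma central_left_assoc: "m (m s p) q = m s (m p q)"
  using central_assoc(1) by (simp add: assoc_def)

lemma central_mid_assoc: "m p (m s q) = m s (m p q)"
  using central_assoc(2)[of p q] central_commute[of p] central_left_assoc[of p q]
  by (simp add: assoc_def)

lemma central_right_assoc: "m p (m q s) = m s (m p q)"
  using central_assoc(3)[of p q] central_commute[of "m p q"] by (simp add: assoc_def)

lemma assoc_central_left: "assoc m (m s p) q r = m s (assoc m p q r)"
  by (simp add: assoc_def central_left_assoc mult_linear)

lemma assoc_central_mid: "assoc m p (m s q) r = m s (assoc m p q r)"
  by (simp add: assoc_def central_mid_assoc central_left_assoc mult_linear)

lemma assoc_central_right: "assoc m p q (m s r) = m s (assoc m p q r)"
  by (simp add: assoc_def central_mid_assoc mult_linear)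

lemma central_inverse:
  assumes st: "m s t = e"
  shows "central t" "m t s = e"
proof -
  show ts: "m t s = e" using central_commute[of t] st by simp
  have cancel: "a = 0" if "m s a = 0" for a
    using central_assoc(2)[of t a] that ts by (simp add: assoc_def unit_left mult_rzero)
  have "assoc m t p q = 0" for p q
    using cancel assoc_central_left[of t p q] st assoc_unit_left by simp
  moreover have "m t p = m p t" for p
    using cancel[of "m t p - m p t"] central_left_assoc[of t p] central_mid_assoc[of p t] st
    by (simp add: mult_linear unit_left unit_right)
  ultimately show "central t" by (simp add: central_def)
qed

end

lemma assoc_central_norm:
  assumes "m x xc = s" "m xc x = s" "central s" "m s s' = e"
  shows "assoc m x xc z = 0"
proof -
  note s' = central_inverse[OF assms(3,4)]
  define x' where "x' = m s' xc"
  have "m x x' = e" "m x' x = e"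
    unfolding x'_def using central_mid_assoc[OF s'(1)] central_left_assoc[OF s'(1)] assms(1,2) s'(2)
    by simp_all
  moreover have "xc = m s x'"
    unfolding x'_def using central_left_assoc[OF assms(3), of s' xc] assms(4) by (simp add: unit_left)
  ultimately show ?thesis
    using assoc_central_mid[OF assms(3), of x x' z] assoc_inverse by (simp add: mult_rzero)
qed

text \<open>If \<open>xy\<close> and \<open>yx\<close> are both central and invertible, then \<open>x\<close> has the right inverse
  \<open>(xy)\<^sup>-\<^sup>1 y\<close> and the left inverse \<open>(yx)\<^sup>-\<^sup>1 y\<close>; flexibility makes them equal.\<close>

lemma central_norms_eq:
  assumes "m x y = s" "m y x = s2" "central s" "central s2" "m s s' = e" "m s2 s2' = e"
  shows "s = s2"
proof -
  note s' = central_inverse[OF assms(3,5)] and s2' = central_inverse[OF assms(4,6)]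
  define r where "r = m s' y"
  define l where "l = m s2' y"
  have r: "m x r = e" unfolding r_def using central_mid_assoc[OF s'(1)] assms(1) s'(2) by simp
  have l: "m l x = e" unfolding l_def using central_left_assoc[OF s2'(1)] assms(2) s2'(2) by simp
  have "assoc m l x r = m s2' (m s' (assoc m y x y))"
    unfolding l_def r_def using assoc_central_left[OF s2'(1)] assoc_central_right[OF s'(1)]
      central_mid_assoc[OF s'(1)] by simp
  hence "assoc m l x r = 0" by (simp add: assoc_flexible mult_rzero)
  hence "l = r" using l r by (simp add: assoc_def unit_left unit_right)
  have "m x l = m s2' s" unfolding l_def using central_mid_assoc[OF s2'(1)] assms(1) by simp
  hence "m s2' s = e" using r \<open>l = r\<close> by simp
  hence "m s2 (m s2' s) = s2" by (simp add: unit_right)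
  thus ?thesis using central_left_assoc[OF assms(4), of s2' s] assms(6) by (simp add: unit_left)
qed

lemma norm_mult:
  assumes "m x xc = s" "m xc x = s" "central s" "m s s' = e"
    and "m y yc = t" "m yc y = t" "central t" "m t t' = e"
  shows "m (m x y) (m yc xc) = m s t"
proof -
  note s' = central_inverse[OF assms(3,4)] and t' = central_inverse[OF assms(7,8)]
  define x' where "x' = m s' xc"
  define y' where "y' = m t' yc"
  have x': "m x x' = e" "m x' x = e"
    unfolding x'_def using central_mid_assoc[OF s'(1)] central_left_assoc[OF s'(1)] assms(1,2) s'(2)
    by simp_all
  have y': "m y y' = e" "m y' y = e"
    unfolding y'_def using central_mid_assoc[OF t'(1)] central_left_assoc[OF t'(1)] assms(5,6) t'(2)
    by simp_all
  have "xc = m s x'"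
    unfolding x'_def using central_left_assoc[OF assms(3), of s' xc] assms(4) by (simp add: unit_left)
  moreover have "yc = m t y'"
    unfolding y'_def using central_left_assoc[OF assms(7), of t' yc] assms(8) by (simp add: unit_left)
  ultimately have "m (m x y) (m yc xc) = m t (m s (m (m x y) (m y' x')))"
    using central_left_assoc[OF assms(7), of y' "m s x'"] central_mid_assoc[OF assms(3), of y' x']
      central_mid_assoc[OF assms(7), of "m x y" "m s (m y' x')"]
      central_mid_assoc[OF assms(3), of "m x y" "m y' x'"]
    by simp
  thus ?thesis using mult_inverses[OF x' y'] central_commute[OF assms(3), of t] by (simp add: unit_right)
qed

end

section \<open>Circular sets and slice functions\<close>

locale slice_algebra = salg mul cj one for mul :: "'a::euclidean_space \<Rightarrow> 'a \<Rightarrow> 'a" and cj one +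
  assumes alg: "alt_star_alg mul cj one" and sph_nonempty: "sph \<noteq> {}"
begin

lemma one_neq_zero: "one \<noteq> 0" using alg by (simp add: alt_star_alg_def)
lemma cj_linear: "linear cj" using alg by (simp add: alt_star_alg_def)
lemma cj_cj [simp]: "cj (cj x) = x" using alg by (simp add: alt_star_alg_def)
lemma cj_mult: "cj (mul x y) = mul (cj y) (cj x)" using alg by (simp add: alt_star_alg_def)
lemma cj_real [simp]: "cj (r *\<^sub>R one) = r *\<^sub>R one" using alg by (simp add: alt_star_alg_def)

lemma cj_one [simp]: "cj one = one" using cj_real[of 1] by simp

lemmas cj_linear_simps [simp] =
  linear_add[OF cj_linear] linear_diff[OF cj_linear] linear_neg[OF cj_linear]
  linear_scale[OF cj_linear] linear_0[OF cj_linear]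

sublocale A: alt_algebra mul one
  by unfold_locales (use alg in \<open>simp_all add: alt_star_alg_def\<close>)

lemma mult_real_left: "mul (r *\<^sub>R one) x = r *\<^sub>R x"
  by (simp add: A.mult_linear A.unit_left)

lemma mult_real_right: "mul x (r *\<^sub>R one) = r *\<^sub>R x"
  by (simp add: A.mult_linear A.unit_right)

lemma cj_sph: "J \<in> sph \<Longrightarrow> cj J = - J"
  by (simp add: sph_def tr_def eq_neg_iff_add_eq_0 add.commute)

lemma sph_square: "J \<in> sph \<Longrightarrow> mul J J = - one"
proof -
  assume J: "J \<in> sph"
  hence "- mul J J = one" using cj_sph[OF J] by (simp add: sph_def nrm_def A.mult_linear)
  thus ?thesis by (metis minus_minus)
qed

lemma sph_mult_mult:
  assumes J: "J \<in> sph"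
  shows "mul J (mul J y) = - y"
proof -
  have "mul J (mul J y) = mul (mul J J) y" using A.left_alternative[of J y] by (simp add: assoc_def)
  also have "\<dots> = - y" using sph_square[OF J] by (simp only: A.mult_lneg A.unit_left)
  finally show ?thesis .
qed

lemma neg_sph:
  assumes J: "J \<in> sph"
  shows "- J \<in> sph"
proof -
  have "tr (- J) = 0" using cj_sph[OF J] by (simp add: tr_def)
  moreover have "nrm (- J) = one" using J by (simp add: sph_def nrm_def A.mult_lneg A.mult_rneg)
  ultimately show ?thesis by (simp add: sph_def)
qed

lemma one_sph_independent:
  assumes J: "J \<in> sph" and h: "a *\<^sub>R one + b *\<^sub>R J = 0"
  shows "a = 0" "b = 0"
proof -
  have "cj (a *\<^sub>R one + b *\<^sub>R J) = 0" using h by simp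
  hence "a *\<^sub>R one - b *\<^sub>R J = 0" using cj_sph[OF J] by simp
  hence "(a *\<^sub>R one + b *\<^sub>R J) + (a *\<^sub>R one - b *\<^sub>R J) = 0" using h by simp
  hence "(2 * a) *\<^sub>R one = 0" by (simp add: algebra_simps scaleR_2[symmetric])
  thus "a = 0" using one_neq_zero by simp
  have "J \<noteq> 0" using J one_neq_zero by (auto simp: sph_def nrm_def A.mult_linear)
  thus "b = 0" using h \<open>a = 0\<close> by simp
qed

lemma pt_eq_0_iff:
  assumes J: "J \<in> sph"
  shows "pt w J = 0 \<longleftrightarrow> w = 0"
proof
  assume "pt w J = 0"
  hence "Re w = 0" "Im w = 0" using one_sph_independent[OF J] unfolding pt_def by blast+
  thus "w = 0" by (simp add: complex_eq_iff)
qed (simp add: pt_def)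

lemma pt_eq_ptD:
  assumes J: "J \<in> sph" and J': "J' \<in> sph" and h: "pt z J = pt z' J'"
  shows "(z' = z \<and> (Im z = 0 \<or> J' = J)) \<or> (z' = cnj z \<and> J' = - J)"
proof -
  have "cj (pt z J) = cj (pt z' J')" using h by simp
  hence c: "Re z *\<^sub>R one - Im z *\<^sub>R J = Re z' *\<^sub>R one - Im z' *\<^sub>R J'"
    using cj_sph[OF J] cj_sph[OF J'] by (simp add: pt_def)
  have "(2 * Re z) *\<^sub>R one = (2 * Re z') *\<^sub>R one"
    using arg_cong2[OF h c, of "(+)"] by (simp add: pt_def algebra_simps scaleR_2[symmetric])
  hence re: "Re z' = Re z" using one_neq_zero by simp
  hence im: "Im z *\<^sub>R J = Im z' *\<^sub>R J'" using h by (simp add: pt_def)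
  hence "mul (Im z *\<^sub>R J) (Im z *\<^sub>R J) = mul (Im z' *\<^sub>R J') (Im z' *\<^sub>R J')" by simp
  hence "(Im z * Im z) *\<^sub>R one = (Im z' * Im z') *\<^sub>R one"
    using sph_square[OF J] sph_square[OF J'] by (simp add: A.mult_linear)
  hence "Im z * Im z = Im z' * Im z'" using one_neq_zero by simp
  hence "Im z' = Im z \<or> Im z' = - Im z" by algebra
  thus ?thesis
  proof
    assume i: "Im z' = Im z"
    hence "z' = z" using re by (simp add: complex_eq_iff)
    moreover have "Im z *\<^sub>R J' = Im z *\<^sub>R J" using im i by auto
    ultimately show ?thesis by auto
  next
    assume i: "Im z' = - Im z"
    show ?thesis
    proof (cases "Im z = 0")
      case False
      have "Im z *\<^sub>R J = Im z *\<^sub>R (- J')" using im i by simp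
      hence "J = - J'" using False by (simp only: scaleR_cancel_left) simp
      thus ?thesis using re i by (simp add: complex_eq_iff)
    qed (use re i in \<open>simp add: complex_eq_iff\<close>)
  qed
qed

definition cnj_closed :: "complex set \<Rightarrow> bool" where
  "cnj_closed E \<longleftrightarrow> (\<forall>z\<in>E. cnj z \<in> E)"

lemma pt_in_circ_iff: "J \<in> sph \<Longrightarrow> cnj_closed E \<Longrightarrow> pt z J \<in> circ E \<longleftrightarrow> z \<in> E"
proof
  assume J: "J \<in> sph" and E: "cnj_closed E" and "pt z J \<in> circ E"
  then obtain z' J' where z': "z' \<in> E" "J' \<in> sph" "pt z J = pt z' J'" by (auto simp: circ_def)
  from pt_eq_ptD[OF J z'(2,3)] have "z = z' \<or> z = cnj z'" by auto
  thus "z \<in> E" using z'(1) E by (auto simp: cnj_closed_def)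
qed (auto simp: circ_def)

lemma circE:
  assumes "x \<in> circ E"
  obtains z J where "z \<in> E" "J \<in> sph" "x = pt z J"
  using assms by (auto simp: circ_def)

lemma sdom_circ:
  assumes E: "cnj_closed E"
  shows "sdom (circ E) = E"
proof -
  obtain J where "J \<in> sph" using sph_nonempty by auto
  thus ?thesis using pt_in_circ_iff[OF _ E] by (auto simp: sdom_def)
qed

lemma stem_circ_iff:
  "cnj_closed E \<Longrightarrow> stem (circ E) F \<longleftrightarrow> (\<forall>z\<in>E. F (cnj z) = (fst (F z), - snd (F z)))"
  by (simp add: stem_def sdom_circ)

lemma stem_snd_real:
  assumes "cnj_closed E" "stem (circ E) F" "z \<in> E" "Im z = 0"
  shows "snd (F z) = 0"
proof -
  have "cnj z = z" using assms(4) by (simp add: complex_eq_iff)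
  moreover have "snd (F (cnj z)) = - snd (F z)" using assms(1-3) by (simp add: stem_circ_iff)
  ultimately show ?thesis by (intro real_vector_eq_neg_self) simp
qed

text \<open>A point of a circular set has at most the two representations \<open>pt z J = pt (cnj z) (-J)\<close>
  (or infinitely many if it is real), and the stem condition makes \<open>induced\<close> independent of
  the choice.\<close>

lemma induced_pt:
  assumes E: "cnj_closed E" and S: "stem (circ E) F" and z: "z \<in> E" and J: "J \<in> sph"
  shows "induced (circ E) F (pt z J) = fst (F z) + mul J (snd (F z))"
proof -
  have unique: "v = fst (F z) + mul J (snd (F z))"
    if "J' \<in> sph" "pt z J = pt z' J'" "v = fst (F z') + mul J' (snd (F z'))" for v z' J'
  proof -
    from pt_eq_ptD[OF J that(1,2)]
    consider "z' = z" "Im z = 0" | "z' = z" "J' = J" | "z' = cnj z" "J' = - J" by blast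
    thus ?thesis
    proof cases
      case 1
      thus ?thesis using that(3) stem_snd_real[OF E S z] by (simp add: A.mult_linear)
    next
      case 2
      thus ?thesis using that(3) by simp
    next
      case 3
      thus ?thesis using that(3) S z E by (simp add: stem_circ_iff A.mult_linear)
    qed
  qed
  have "(SOME v. \<exists>z' J'. J' \<in> sph \<and> pt z J = pt z' J' \<and> v = fst (F z') + mul J' (snd (F z')))
      = fst (F z) + mul J (snd (F z))"
    by (rule some_equality) (use J unique in blast)+
  moreover have "pt z J \<in> circ E" using pt_in_circ_iff[OF J E] z by simp
  ultimately show ?thesis by (simp add: induced_def)
qed

lemma induced_outside: "x \<notin> W \<Longrightarrow> induced W F x = 0"
  by (simp add: induced_def)

lemma induced_cong:
  assumes E: "cnj_closed E" and SF: "stem (circ E) F" and SG: "stem (circ E) G"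
    and eq: "\<And>z. z \<in> E \<Longrightarrow> F z = G z"
  shows "induced (circ E) F = induced (circ E) G"
proof
  fix x
  show "induced (circ E) F x = induced (circ E) G x"
  proof (cases "x \<in> circ E")
    case True
    then obtain z J where "z \<in> E" "J \<in> sph" "x = pt z J" by (rule circE)
    thus ?thesis using induced_pt[OF E SF] induced_pt[OF E SG] eq by simp
  qed (simp add: induced_outside)
qed

lemma stem_unique:
  assumes E: "cnj_closed E" and SF: "stem (circ E) F" and SG: "stem (circ E) G"
    and eq: "induced (circ E) F = induced (circ E) G" and z: "z \<in> E"
  shows "F z = G z"
proof -
  obtain J where J: "J \<in> sph" using sph_nonempty by auto
  have at_J: "fst (F z) + mul J' (snd (F z)) = fst (G z) + mul J' (snd (G z))" if "J' \<in> sph" for J'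
    using eq induced_pt[OF E SF z that] induced_pt[OF E SG z that] by metis
  have "(fst (F z) - fst (G z)) + (fst (F z) - fst (G z)) = 0"
    using arg_cong2[OF at_J[OF J] at_J[OF neg_sph[OF J]], of "(+)"]
    by (simp add: A.mult_linear algebra_simps)
  hence fst: "fst (F z) = fst (G z)"
    using real_vector_double_cancel[of "fst (F z) - fst (G z)" 0] by simp
  hence "mul J (mul J (snd (F z) - snd (G z))) = 0" using at_J[OF J] by (simp add: A.mult_linear)
  hence "snd (F z) = snd (G z)" using sph_mult_mult[OF J] by simp
  thus ?thesis using fst by (simp add: prod_eq_iff)
qed

lemma
  assumes "f \<in> SF W"
  shows stem_stem_of: "stem W (stem_of W f)" and induced_stem_of: "induced W (stem_of W f) = f"
proof -
  obtain F where "stem W F" "f = induced W F" using assms by (auto simp: SF_def)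
  hence "stem W (stem_of W f) \<and> f = induced W (stem_of W f)"
    unfolding stem_of_def by (rule someI[where x=F, OF conjI])
  thus "stem W (stem_of W f)" "induced W (stem_of W f) = f" by auto
qed

lemma induced_in_SF: "stem W F \<Longrightarrow> induced W F \<in> SF W"
  by (auto simp: SF_def)

lemma stem_of_induced:
  assumes E: "cnj_closed E" and S: "stem (circ E) F" and z: "z \<in> E"
  shows "stem_of (circ E) (induced (circ E) F) z = F z"
proof -
  have i: "induced (circ E) F \<in> SF (circ E)" by (rule induced_in_SF[OF S])
  show ?thesis by (rule stem_unique[OF E stem_stem_of[OF i] S induced_stem_of[OF i] z])
qed

lemma SF_eqI:
  assumes E: "cnj_closed E" and f: "f \<in> SF (circ E)" and g: "g \<in> SF (circ E)"
    and h: "\<And>z. z \<in> E \<Longrightarrow> stem_of (circ E) f z = stem_of (circ E) g z"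
  shows "f = g"
  using induced_cong[OF E stem_stem_of[OF f] stem_stem_of[OF g] h] by (simp add: induced_stem_of f g)


section \<open>The complexified algebra\<close>

lemma cmul_bilinear: "bilinear cmul"
  unfolding bilinear_def
proof (intro allI conjI)
  fix p :: "'a \<times> 'a"
  show "linear (cmul p)"
    by (rule linearI) (simp_all add: cmul_def A.mult_linear algebra_simps scaleR_right_diff_distrib)
  show "linear (\<lambda>x. cmul x p)"
    by (rule linearI) (simp_all add: cmul_def A.mult_linear algebra_simps scaleR_right_diff_distrib)
qed

lemma cmul_left_alternative: "assoc cmul p p q = 0"
proof -
  obtain a b where p: "p = (a, b)" by (cases p)
  obtain c d where q: "q = (c, d)" by (cases q)
  have "fst (assoc cmul p p q) =
      assoc mul a a c - assoc mul b b c - (assoc mul a b d + assoc mul b a d)"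
    "snd (assoc cmul p p q) =
      assoc mul a a d - assoc mul b b d + (assoc mul a b c + assoc mul b a c)"
    unfolding p q cmul_def assoc_def fst_conv snd_conv A.mult_linear by (simp_all add: algebra_simps)
  thus ?thesis
    using A.assoc_swap_left[of a b d] A.assoc_swap_left[of a b c]
    by (simp add: A.left_alternative prod_eq_iff)
qed

lemma cmul_right_alternative: "assoc cmul q p p = 0"
proof -
  obtain a b where p: "p = (a, b)" by (cases p)
  obtain c d where q: "q = (c, d)" by (cases q)
  have "fst (assoc cmul q p p) =
      assoc mul c a a - assoc mul c b b - (assoc mul d b a + assoc mul d a b)"
    "snd (assoc cmul q p p) =
      assoc mul d a a - assoc mul d b b + (assoc mul c a b + assoc mul c b a)"
    unfolding p q cmul_def assoc_def fst_conv snd_conv A.mult_linear by (simp_all add: algebra_simps)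
  thus ?thesis
    using A.assoc_swap_right[of d b a] A.assoc_swap_right[of c a b]
    by (simp add: A.right_alternative prod_eq_iff)
qed

sublocale C: alt_algebra cmul "(one, 0)"
proof
  show "cmul (one, 0) x = x" for x by (simp add: cmul_def A.unit_left A.mult_linear)
  show "cmul x (one, 0) = x" for x by (simp add: cmul_def A.unit_right A.mult_linear)
qed (simp_all add: cmul_bilinear cmul_left_alternative cmul_right_alternative)

text \<open>The complex numbers sit inside \<open>A\<^sub>\<complex>\<close> as \<open>\<alpha> + \<imath>\<beta> \<mapsto> (\<alpha>, \<beta>)\<close>, with \<open>to_complex\<close>
  a linear left inverse; \<open>cbar\<close> is the complex conjugation \<open>a + \<imath>b \<mapsto> a - \<imath>b\<close> of \<open>A\<^sub>\<complex>\<close>.\<close>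

definition cscalar :: "complex \<Rightarrow> 'a \<times> 'a" where
  "cscalar w = (Re w *\<^sub>R one, Im w *\<^sub>R one)"

definition to_complex :: "'a \<times> 'a \<Rightarrow> complex" where
  "to_complex p = Complex ((fst p \<bullet> one) / (one \<bullet> one)) ((snd p \<bullet> one) / (one \<bullet> one))"

definition cbar :: "'a \<times> 'a \<Rightarrow> 'a \<times> 'a" where
  "cbar p = (fst p, - snd p)"

lemma cmul_imul_left: "cmul (imul p) q = imul (cmul p q)"
  by (simp add: imul_def cmul_def A.mult_linear algebra_simps)

lemma cmul_imul_right: "cmul p (imul q) = imul (cmul p q)"
  by (simp add: imul_def cmul_def A.mult_linear algebra_simps)

lemma imul_add: "imul (p + q) = imul p + imul q"
  by (simp add: imul_def)

lemma imul_diff: "imul (p - q) = imul p - imul q"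
  by (simp add: imul_def)

lemma imul_imul [simp]: "imul (imul p) = - p"
  by (simp add: imul_def prod_eq_iff)

lemma imul_zero [simp]: "imul 0 = 0"
  by (simp add: imul_def zero_prod_def)

lemma linear_imul: "linear imul"
  by (rule linearI) (simp_all add: imul_def)

lemma cmul_cscalar_left: "cmul (cscalar w) p = Re w *\<^sub>R p + Im w *\<^sub>R imul p"
  by (simp add: cscalar_def cmul_def imul_def mult_real_left prod_eq_iff algebra_simps)

lemma cmul_cscalar_right: "cmul p (cscalar w) = Re w *\<^sub>R p + Im w *\<^sub>R imul p"
  by (simp add: cscalar_def cmul_def imul_def mult_real_right prod_eq_iff algebra_simps)

lemma central_cscalar: "C.central (cscalar w)"
proof -
  have "assoc cmul (cscalar w) p q = 0" for p q
    by (simp add: assoc_def cmul_cscalar_left C.mult_linear cmul_imul_left cmul_imul_right imul_add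
        linear_scale[OF linear_imul])
  moreover have "cmul (cscalar w) p = cmul p (cscalar w)" for p
    by (simp add: cmul_cscalar_left cmul_cscalar_right)
  ultimately show ?thesis by (simp add: C.central_def)
qed

lemma cscalar_mult: "cmul (cscalar w) (cscalar v) = cscalar (w * v)"
  unfolding cmul_cscalar_left by (simp add: cscalar_def imul_def prod_eq_iff algebra_simps)

lemma cscalar_1: "cscalar 1 = (one, 0)"
  by (simp add: cscalar_def)

lemma cscalar_inverse:
  "w \<noteq> 0 \<Longrightarrow> cmul (cscalar w) (cscalar (inverse w)) = (one, 0)"
  "w \<noteq> 0 \<Longrightarrow> cmul (cscalar (inverse w)) (cscalar w) = (one, 0)"
  by (simp_all add: cscalar_mult cscalar_1)

lemma to_complex_cscalar [simp]: "to_complex (cscalar w) = w"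
proof -
  have "one \<bullet> one \<noteq> 0" using one_neq_zero by simp
  thus ?thesis by (simp add: to_complex_def cscalar_def complex_eq_iff)
qed

lemma cscalar_eq_iff: "cscalar w = cscalar v \<longleftrightarrow> w = v"
  by (metis to_complex_cscalar)

lemma ccj_cmul: "ccj (cmul p q) = cmul (ccj q) (ccj p)"
  by (simp add: ccj_def cmul_def cj_mult algebra_simps)

lemma ccj_ccj [simp]: "ccj (ccj p) = p"
  by (simp add: ccj_def)

lemma ccj_cscalar [simp]: "ccj (cscalar w) = cscalar w"
  by (simp add: ccj_def cscalar_def)

lemma ccj_imul: "ccj (imul p) = imul (ccj p)"
  by (simp add: ccj_def imul_def)

lemma linear_ccj: "linear ccj"
  by (rule linearI) (simp_all add: ccj_def)

lemma cbar_cmul: "cbar (cmul p q) = cmul (cbar p) (cbar q)"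
  by (simp add: cbar_def cmul_def A.mult_linear)

lemma cbar_ccj: "cbar (ccj p) = ccj (cbar p)"
  by (simp add: cbar_def ccj_def)

lemma cbar_cscalar: "cbar (cscalar w) = cscalar (cnj w)"
  by (simp add: cbar_def cscalar_def)

lemma real_pair_eq_cscalar: "fst p \<in> reals_A \<Longrightarrow> snd p \<in> reals_A \<Longrightarrow> p = cscalar (to_complex p)"
proof -
  assume "fst p \<in> reals_A" "snd p \<in> reals_A"
  then obtain r s where "fst p = r *\<^sub>R one" "snd p = s *\<^sub>R one" by (auto simp: reals_A_def)
  hence "p = cscalar (Complex r s)" by (simp add: cscalar_def prod_eq_iff)
  thus ?thesis by simp
qed

lemma cscalar_in_reals_A: "fst (cscalar w) \<in> reals_A" "snd (cscalar w) \<in> reals_A"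
  by (auto simp: cscalar_def reals_A_def)

lemma pt_cscalar: "fst (cscalar w) + mul J (snd (cscalar w)) = pt w J"
  by (simp add: cscalar_def pt_def mult_real_right)

text \<open>On each slice \<open>\<real> + \<real>J\<close>, left multiplication by \<open>pt w J\<close> is multiplication by the
  complex scalar \<open>w\<close> in \<open>A\<^sub>\<complex>\<close>.\<close>

lemma pt_mult: "J \<in> sph \<Longrightarrow>
  mul (pt w J) (a + mul J b) = fst (cmul (cscalar w) (a, b)) + mul J (snd (cmul (cscalar w) (a, b)))"
  by (simp add: pt_def cmul_cscalar_left imul_def A.mult_linear A.unit_left mult_real_left
      sph_mult_mult algebra_simps)

lemma pt_mult_pt:
  assumes J: "J \<in> sph"
  shows "mul (pt w J) (pt v J) = pt (w * v) J"
proof -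
  have "pt v J = Re v *\<^sub>R one + mul J (Im v *\<^sub>R one)" by (simp add: pt_def mult_real_right)
  moreover have "(Re v *\<^sub>R one, Im v *\<^sub>R one) = cscalar v" by (simp add: cscalar_def)
  ultimately have "mul (pt w J) (pt v J) =
      fst (cmul (cscalar w) (cscalar v)) + mul J (snd (cmul (cscalar w) (cscalar v)))"
    using pt_mult[OF J, of w "Re v *\<^sub>R one" "Im v *\<^sub>R one"] by simp
  thus ?thesis using pt_cscalar[of "w * v" J] by (simp add: cscalar_mult)
qed

lemma ainv_pt:
  assumes J: "J \<in> sph" and w: "w \<noteq> 0"
  shows "ainv (pt w J) = pt (inverse w) J"
proof -
  have "pt 1 J = one" by (simp add: pt_def)
  hence inv: "mul (pt w J) (pt (inverse w) J) = one" "mul (pt (inverse w) J) (pt w J) = one"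
    using pt_mult_pt[OF J] w by simp_all
  show ?thesis unfolding ainv_def
    by (rule some_equality) (use inv A.inverse_unique[OF inv] in blast)+
qed


section \<open>The algebra of slice functions\<close>

abbreviation St :: "complex set \<Rightarrow> ('a \<Rightarrow> 'a) \<Rightarrow> complex \<Rightarrow> 'a \<times> 'a" where
  "St E f \<equiv> stem_of (circ E) f"

lemma stem_circ_iff_cbar: "cnj_closed E \<Longrightarrow> stem (circ E) F \<longleftrightarrow> (\<forall>z\<in>E. F (cnj z) = cbar (F z))"
  by (simp add: stem_circ_iff cbar_def)

lemma SF_pt:
  assumes E: "cnj_closed E" and f: "f \<in> SF (circ E)" and z: "z \<in> E" and J: "J \<in> sph"
  shows "f (pt z J) = fst (St E f z) + mul J (snd (St E f z))"
  using induced_pt[OF E stem_stem_of[OF f] z J] induced_stem_of[OF f] by simp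

lemma SF_outside: "f \<in> SF W \<Longrightarrow> x \<notin> W \<Longrightarrow> f x = 0"
  using induced_stem_of[of f W] induced_outside[of x W] by metis

lemma stem_cmul:
  "cnj_closed E \<Longrightarrow> stem (circ E) F \<Longrightarrow> stem (circ E) G \<Longrightarrow> stem (circ E) (\<lambda>z. cmul (F z) (G z))"
  by (simp add: stem_circ_iff_cbar cbar_cmul)

lemma stem_ccj: "cnj_closed E \<Longrightarrow> stem (circ E) F \<Longrightarrow> stem (circ E) (\<lambda>z. ccj (F z))"
  by (simp add: stem_circ_iff_cbar cbar_ccj)

lemma stem_cscalar:
  "cnj_closed E \<Longrightarrow> (\<forall>z\<in>E. c (cnj z) = cnj (c z)) \<Longrightarrow> stem (circ E) (\<lambda>z. cscalar (c z))"
  by (simp add: stem_circ_iff_cbar cbar_cscalar)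

lemma stem_const: "cnj_closed E \<Longrightarrow> stem (circ E) (\<lambda>z. (a, 0))"
  by (simp add: stem_circ_iff_cbar cbar_def)

context
  fixes E assumes E: "cnj_closed E"
begin

lemma sprod_in_SF: "f \<in> SF (circ E) \<Longrightarrow> g \<in> SF (circ E) \<Longrightarrow> sprod (circ E) f g \<in> SF (circ E)"
  unfolding sprod_def by (intro induced_in_SF stem_cmul E stem_stem_of)

lemma St_sprod:
  "f \<in> SF (circ E) \<Longrightarrow> g \<in> SF (circ E) \<Longrightarrow> z \<in> E \<Longrightarrow>
    St E (sprod (circ E) f g) z = cmul (St E f z) (St E g z)"
  unfolding sprod_def by (intro stem_of_induced stem_cmul E stem_stem_of)

lemma sconj_in_SF: "f \<in> SF (circ E) \<Longrightarrow> sconj (circ E) f \<in> SF (circ E)"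
  unfolding sconj_def by (intro induced_in_SF stem_ccj E stem_stem_of)

lemma St_sconj: "f \<in> SF (circ E) \<Longrightarrow> z \<in> E \<Longrightarrow> St E (sconj (circ E) f) z = ccj (St E f z)"
  unfolding sconj_def by (intro stem_of_induced stem_ccj E stem_stem_of)

lemma sone_in_SF: "sone (circ E) \<in> SF (circ E)"
  unfolding sone_def by (intro induced_in_SF stem_const E)

lemma St_sone: "z \<in> E \<Longrightarrow> St E (sone (circ E)) z = (one, 0)"
  unfolding sone_def by (intro stem_of_induced stem_const E)

lemma sN_in_SF: "f \<in> SF (circ E) \<Longrightarrow> sN (circ E) f \<in> SF (circ E)"
  unfolding sN_def by (intro sprod_in_SF sconj_in_SF)

lemma St_sN: "f \<in> SF (circ E) \<Longrightarrow> z \<in> E \<Longrightarrow> St E (sN (circ E) f) z = cmul (St E f z) (ccj (St E f z))"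
  unfolding sN_def by (simp add: St_sprod sconj_in_SF St_sconj)

lemma zero_in_SF: "(\<lambda>x. 0) \<in> SF (circ E)" and St_zero: "z \<in> E \<Longrightarrow> St E (\<lambda>x. 0) z = 0"
proof -
  have st: "stem (circ E) (\<lambda>z. 0)" using E by (simp add: stem_circ_iff_cbar cbar_def zero_prod_def)
  have eq: "(\<lambda>x. 0) = induced (circ E) (\<lambda>z. 0)"
  proof
    fix x show "0 = induced (circ E) (\<lambda>z. 0) x"
    proof (cases "x \<in> circ E")
      case True
      then obtain z J where "z \<in> E" "J \<in> sph" "x = pt z J" by (rule circE)
      thus ?thesis using induced_pt[OF E st] by (simp add: A.mult_linear)
    qed (simp add: induced_outside)
  qed
  show "(\<lambda>x. 0) \<in> SF (circ E)" unfolding eq by (rule induced_in_SF[OF st])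
  show "z \<in> E \<Longrightarrow> St E (\<lambda>x. 0) z = 0" unfolding eq by (rule stem_of_induced[OF E st])
qed

end

lemma restr_induced: "E' \<subseteq> E \<Longrightarrow> restr (circ E') (induced (circ E) F) = induced (circ E') F"
  using circ_def by (fastforce simp: restr_def induced_def)

lemma
  assumes E': "cnj_closed E'" and E: "cnj_closed E" and sub: "E' \<subseteq> E" and f: "f \<in> SF (circ E)"
  shows restr_in_SF: "restr (circ E') f \<in> SF (circ E')"
    and St_restr: "z \<in> E' \<Longrightarrow> St E' (restr (circ E') f) z = St E f z"
proof -
  have eq: "restr (circ E') f = induced (circ E') (St E f)"
    using restr_induced[OF sub, of "St E f"] induced_stem_of[OF f] by metis
  have st: "stem (circ E') (St E f)"
    using stem_stem_of[OF f] sub E E' by (auto simp: stem_circ_iff)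
  show "restr (circ E') f \<in> SF (circ E')" unfolding eq by (rule induced_in_SF[OF st])
  show "z \<in> E' \<Longrightarrow> St E' (restr (circ E') f) z = St E f z"
    unfolding eq by (rule stem_of_induced[OF E' st])
qed

context
  fixes E h c
  assumes E: "cnj_closed E" and h: "h \<in> SF (circ E)"
    and St_h: "\<And>z. z \<in> E \<Longrightarrow> St E h z = cscalar (c z)"
begin

lemma cscalar_stem_cnj: "z \<in> E \<Longrightarrow> c (cnj z) = cnj (c z)"
proof -
  assume z: "z \<in> E"
  have "cnj z \<in> E" using E z by (simp add: cnj_closed_def)
  hence "cscalar (c (cnj z)) = St E h (cnj z)" using St_h by simp
  also have "\<dots> = cbar (St E h z)" using stem_stem_of[OF h] E z by (simp add: stem_circ_iff_cbar)
  also have "\<dots> = cscalar (cnj (c z))" using St_h[OF z] by (simp add: cbar_cscalar)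
  finally show ?thesis by (simp add: cscalar_eq_iff)
qed

lemma cnj_closed_nonzero: "cnj_closed {z \<in> E. c z \<noteq> 0}"
  using E cscalar_stem_cnj by (auto simp: cnj_closed_def)

lemma circ_diff_zeros: "circ E - zeros (circ E) h = circ {z \<in> E. c z \<noteq> 0}"
proof -
  have h_pt: "h (pt z J) = pt (c z) J" if "z \<in> E" "J \<in> sph" for z J
    using SF_pt[OF E h that] St_h[OF that(1)] pt_cscalar by simp
  show ?thesis
  proof (intro set_eqI iffI)
    fix x assume "x \<in> circ E - zeros (circ E) h"
    hence x: "x \<in> circ E" "h x \<noteq> 0" by (auto simp: zeros_def)
    from x(1) obtain z J where zJ: "z \<in> E" "J \<in> sph" "x = pt z J" by (rule circE)
    have "c z \<noteq> 0" using x(2) h_pt[OF zJ(1,2)] zJ(3) pt_eq_0_iff[OF zJ(2)] by simp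
    thus "x \<in> circ {z \<in> E. c z \<noteq> 0}" using zJ by (auto simp: circ_def)
  next
    fix x assume "x \<in> circ {z \<in> E. c z \<noteq> 0}"
    then obtain z J where zJ: "z \<in> E" "c z \<noteq> 0" "J \<in> sph" "x = pt z J" by (auto simp: circ_def)
    have "x \<in> circ E" using zJ by (auto simp: circ_def)
    moreover have "h x \<noteq> 0" using h_pt[OF zJ(1,3)] zJ(2,4) pt_eq_0_iff[OF zJ(3)] by simp
    ultimately show "x \<in> circ E - zeros (circ E) h" by (auto simp: zeros_def)
  qed
qed

lemma cscalar_stem_in_center: "h \<in> center (SF (circ E)) (sprod (circ E))"
proof -
  have "sprod (circ E) (sprod (circ E) h x) y = sprod (circ E) h (sprod (circ E) x y)
        \<and> sprod (circ E) h x = sprod (circ E) x h"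
    if x: "x \<in> SF (circ E)" and y: "y \<in> SF (circ E)" for x y
  proof
    show "sprod (circ E) (sprod (circ E) h x) y = sprod (circ E) h (sprod (circ E) x y)"
      by (rule SF_eqI[OF E])
        (simp_all add: E h x y sprod_in_SF St_sprod St_h C.central_left_assoc[OF central_cscalar])
    show "sprod (circ E) h x = sprod (circ E) x h"
      by (rule SF_eqI[OF E])
        (simp_all add: E h x sprod_in_SF St_sprod St_h C.central_commute[OF central_cscalar])
  qed
  thus ?thesis using h unfolding center_def by blast
qed

end

lemma
  assumes E: "cnj_closed E" and f: "f \<in> SF (circ E)" and g: "g \<in> SF (circ E)"
    and fg: "\<And>z. z \<in> E \<Longrightarrow> cmul (St E f z) (St E g z) = (one, 0)"
    and gf: "\<And>z. z \<in> E \<Longrightarrow> cmul (St E g z) (St E f z) = (one, 0)"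
  shows invertible_inI: "invertible_in (SF (circ E)) (sprod (circ E)) (sone (circ E)) f"
    and inverse_in_eqI: "inverse_in (SF (circ E)) (sprod (circ E)) (sone (circ E)) f = g"
proof -
  have fg': "sprod (circ E) f g = sone (circ E)"
    by (rule SF_eqI[OF E]) (simp_all add: E f g sprod_in_SF St_sprod sone_in_SF St_sone fg)
  have gf': "sprod (circ E) g f = sone (circ E)"
    by (rule SF_eqI[OF E]) (simp_all add: E f g sprod_in_SF St_sprod sone_in_SF St_sone gf)
  show "invertible_in (SF (circ E)) (sprod (circ E)) (sone (circ E)) f"
    using f g fg' gf' by (auto simp: invertible_in_def)
  have unique: "y = g" if y: "y \<in> SF (circ E)" "sprod (circ E) f y = sone (circ E)" for y
  proof (rule SF_eqI[OF E y(1) g])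
    fix z assume z: "z \<in> E"
    have "cmul (St E f z) (St E y z) = (one, 0)"
      using arg_cong[OF y(2), of "\<lambda>h. St E h z"] St_sprod[OF E f y(1) z] St_sone[OF E z] by simp
    thus "St E y z = St E g z" using C.inverse_unique[OF fg[OF z] gf[OF z]] by blast
  qed
  show "inverse_in (SF (circ E)) (sprod (circ E)) (sone (circ E)) f = g"
    unfolding inverse_in_def by (rule some_equality) (use g fg' gf' unique in blast)+
qed

text \<open>Conversely, central and invertible slice functions have pointwise central and invertible
  stems: test centrality against the slice functions with constant stems \<open>(a, 0)\<close>, which
  together with \<open>imul\<close> span \<open>A\<^sub>\<complex>\<close>.\<close>

lemma central_St_of_center:
  assumes E: "cnj_closed E" and h: "h \<in> center (SF (circ E)) (sprod (circ E))" and z: "z \<in> E"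
  shows "C.central (St E h z)"
proof -
  have hS: "h \<in> SF (circ E)" using h by (simp add: center_def)
  define k where "k a = induced (circ E) (\<lambda>w. (a, 0))" for a
  have kS: "k a \<in> SF (circ E)" for a unfolding k_def by (rule induced_in_SF[OF stem_const[OF E]])
  have kSt: "St E (k a) z = (a, 0)" for a unfolding k_def by (rule stem_of_induced[OF E stem_const[OF E] z])
  let ?n = "St E h z"
  have split: "p = (fst p, 0) + imul (snd p, 0)" for p :: "'a \<times> 'a" by (simp add: imul_def)
  have assoc_imul: "assoc cmul x (imul p) q = imul (assoc cmul x p q)"
    "assoc cmul x p (imul q) = imul (assoc cmul x p q)" for x p q
    by (simp_all add: assoc_def cmul_imul_left cmul_imul_right imul_diff)
  have a1: "assoc cmul ?n (a, 0) (b, 0) = 0" for a b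
  proof -
    have "sprod (circ E) (sprod (circ E) h (k a)) (k b) = sprod (circ E) h (sprod (circ E) (k a) (k b))"
      using h kS[of a] kS[of b] unfolding center_def by blast
    from arg_cong[OF this, of "\<lambda>f. St E f z"] show ?thesis
      using z by (simp add: St_sprod sprod_in_SF E hS kS kSt assoc_def)
  qed
  have c1: "cmul ?n (a, 0) = cmul (a, 0) ?n" for a
  proof -
    have "sprod (circ E) h (k a) = sprod (circ E) (k a) h" using h kS[of a] unfolding center_def by blast
    from arg_cong[OF this, of "\<lambda>f. St E f z"] show ?thesis using z by (simp add: St_sprod E hS kS kSt)
  qed
  have a2: "assoc cmul ?n p (b, 0) = 0" for p b
    using a1[of "fst p" b] a1[of "snd p" b] split[of p]
    by (metis C.assoc_add(2) assoc_imul(1) imul_zero add_0)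
  have "assoc cmul ?n p q = 0" for p q
    using a2[of p "fst q"] a2[of p "snd q"] split[of q]
    by (metis C.assoc_add(3) assoc_imul(2) imul_zero add_0)
  moreover have "cmul ?n p = cmul p ?n" for p
  proof -
    have "cmul ?n p = cmul ?n (fst p, 0) + imul (cmul ?n (snd p, 0))"
      using split[of p] by (metis C.mult_radd cmul_imul_right)
    also have "\<dots> = cmul (fst p, 0) ?n + imul (cmul (snd p, 0) ?n)" by (simp add: c1)
    also have "\<dots> = cmul p ?n" using split[of p] by (metis C.mult_ladd cmul_imul_left)
    finally show ?thesis .
  qed
  ultimately show ?thesis by (simp add: C.central_def)
qed

lemma St_right_inverse:
  assumes E: "cnj_closed E" and h: "invertible_in (SF (circ E)) (sprod (circ E)) (sone (circ E)) h"
    and z: "z \<in> E"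
  obtains y where "cmul (St E h z) y = (one, 0)"
proof -
  obtain y where y: "y \<in> SF (circ E)" "sprod (circ E) h y = sone (circ E)" and hS: "h \<in> SF (circ E)"
    using h by (auto simp: invertible_in_def)
  have "cmul (St E h z) (St E y z) = (one, 0)"
    using arg_cong[OF y(2), of "\<lambda>f. St E f z"] St_sprod[OF E hS y(1) z] St_sone[OF E z] by simp
  thus ?thesis using that by blast
qed

lemma
  assumes E: "cnj_closed E" and h: "h \<in> SF (circ E)" and St_h: "\<And>z. z \<in> E \<Longrightarrow> St E h z = cscalar (c z)"
    and c: "\<And>z. z \<in> E \<Longrightarrow> c z \<noteq> 0"
  shows cscalar_stem_invertible: "invertible_in (SF (circ E)) (sprod (circ E)) (sone (circ E)) h"
    and cscalar_stem_inverse: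
      "inverse_in (SF (circ E)) (sprod (circ E)) (sone (circ E)) h = induced (circ E) (\<lambda>z. cscalar (inverse (c z)))"
proof -
  have "\<forall>z\<in>E. inverse (c (cnj z)) = cnj (inverse (c z))"
    using cscalar_stem_cnj[OF E h St_h] by (simp add: complex_cnj_inverse)
  hence st: "stem (circ E) (\<lambda>z. cscalar (inverse (c z)))" by (rule stem_cscalar[OF E])
  note inv = invertible_inI[OF E h induced_in_SF[OF st]] inverse_in_eqI[OF E h induced_in_SF[OF st]]
  show "invertible_in (SF (circ E)) (sprod (circ E)) (sone (circ E)) h"
    by (rule inv(1)) (simp_all add: stem_of_induced[OF E st] St_h c cscalar_inverse)
  show "inverse_in (SF (circ E)) (sprod (circ E)) (sone (circ E)) h = induced (circ E) (\<lambda>z. cscalar (inverse (c z)))"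
    by (rule inv(2)) (simp_all add: stem_of_induced[OF E st] St_h c cscalar_inverse)
qed


section \<open>Slice regularity\<close>

definition cr_regular :: "complex set \<Rightarrow> (complex \<Rightarrow> 'a \<times> 'a) \<Rightarrow> bool" where
  "cr_regular U F \<longleftrightarrow> (\<forall>z\<in>U. F differentiable (at z)) \<and>
     continuous_on U (\<lambda>z. frechet_derivative F (at z) 1) \<and>
     continuous_on U (\<lambda>z. frechet_derivative F (at z) \<i>) \<and>
     (\<forall>z\<in>U. frechet_derivative F (at z) 1 + imul (frechet_derivative F (at z) \<i>) = 0)"

lemma slice_regular_iff_cr_regular:
  "cnj_closed E \<Longrightarrow> h \<in> SF (circ E) \<Longrightarrow> slice_regular (circ E) h \<longleftrightarrow> cr_regular E (St E h)"
  unfolding slice_regular_def cr_regular_def Let_def by (simp add: sdom_circ)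

lemma open_sdom:
  assumes W: "open W"
  shows "open (sdom W)"
proof -
  have eq: "sdom W = (\<Union>J\<in>sph. (\<lambda>z. pt z J) -` W)" by (auto simp: sdom_def)
  have "open ((\<lambda>z. pt z J) -` W)" for J
  proof (rule continuous_open_vimage[OF W])
    fix x show "continuous (at x) (\<lambda>z. pt z J)" unfolding pt_def
      by (intro continuous_intros isCont_Re[OF continuous_ident] isCont_Im[OF continuous_ident])
  qed
  thus ?thesis unfolding eq by blast
qed

lemma bounded_linear_ccj: "bounded_linear ccj"
  using linear_ccj linear_conv_bounded_linear by blast

lemma bounded_linear_imul: "bounded_linear imul"
  using linear_imul linear_conv_bounded_linear by blast

lemma bounded_linear_to_complex: "bounded_linear to_complex"
proof -
  have "linear to_complex"
    by (rule linearI) (simp_all add: to_complex_def complex_eq_iff inner_add_left add_divide_distrib)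
  thus ?thesis using linear_conv_bounded_linear by blast
qed

lemma bounded_linear_cscalar: "bounded_linear cscalar"
proof -
  have "linear cscalar" by (rule linearI) (simp_all add: cscalar_def algebra_simps)
  thus ?thesis using linear_conv_bounded_linear by blast
qed

lemma bounded_bilinear_cmul: "bounded_bilinear cmul"
  using cmul_bilinear bilinear_conv_bounded_bilinear by blast

lemma to_complex_imul: "to_complex (imul p) = \<i> * to_complex p"
  by (simp add: to_complex_def imul_def complex_eq_iff inner_minus_left)

lemma cscalar_i_mult: "cscalar (\<i> * w) = imul (cscalar w)"
  by (simp add: cscalar_def imul_def)

lemma cr_regularI:
  assumes deriv: "\<And>z. z \<in> U \<Longrightarrow> (F has_derivative DF z) (at z)"
    and CR: "\<And>z. z \<in> U \<Longrightarrow> DF z \<i> = imul (DF z 1)"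
    and cont: "continuous_on U (\<lambda>z. DF z 1)"
  shows "cr_regular U F"
proof -
  have fd: "frechet_derivative F (at z) = DF z" if "z \<in> U" for z
    using frechet_derivative_at[OF deriv[OF that]] by simp
  have "continuous_on U (\<lambda>z. imul (DF z 1))"
    by (rule bounded_linear.continuous_on[OF bounded_linear_imul cont])
  hence "continuous_on U (\<lambda>z. frechet_derivative F (at z) \<i>)"
    by (rule continuous_on_cong[THEN iffD1, rotated 2]) (simp_all add: fd CR)
  moreover have "continuous_on U (\<lambda>z. frechet_derivative F (at z) 1)"
    using cont by (rule continuous_on_cong[THEN iffD1, rotated 2]) (simp_all add: fd)
  moreover have "F differentiable (at z)" if "z \<in> U" for z
    using deriv[OF that] by (rule differentiableI)
  moreover have "frechet_derivative F (at z) 1 + imul (frechet_derivative F (at z) \<i>) = 0"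
    if "z \<in> U" for z
    using fd[OF that] CR[OF that] by simp
  ultimately show ?thesis unfolding cr_regular_def by blast
qed

lemma cr_regular_has_derivative:
  "cr_regular U F \<Longrightarrow> z \<in> U \<Longrightarrow> (F has_derivative frechet_derivative F (at z)) (at z)"
  using frechet_derivative_works by (auto simp: cr_regular_def)

lemma cr_regular_CR:
  "cr_regular U F \<Longrightarrow> z \<in> U \<Longrightarrow> frechet_derivative F (at z) \<i> = imul (frechet_derivative F (at z) 1)"
proof -
  assume F: "cr_regular U F" and "z \<in> U"
  hence "imul (frechet_derivative F (at z) 1 + imul (frechet_derivative F (at z) \<i>)) = 0"
    using F by (simp add: cr_regular_def)
  thus ?thesis by (simp add: imul_def prod_eq_iff)
qed

lemma cr_regular_continuous_derivative:
  "cr_regular U F \<Longrightarrow> continuous_on U (\<lambda>z. frechet_derivative F (at z) 1)"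
  by (simp add: cr_regular_def)

lemma cr_regular_continuous: "cr_regular U F \<Longrightarrow> continuous_on U F"
  by (auto simp: cr_regular_def intro!: continuous_at_imp_continuous_on
      differentiable_imp_continuous_within)

context
  fixes U F assumes F: "cr_regular U F"
begin

lemma cr_regular_transform:
  assumes U: "open U" and eq: "\<And>z. z \<in> U \<Longrightarrow> F z = G z"
  shows "cr_regular U G"
proof (rule cr_regularI)
  show "(G has_derivative frechet_derivative F (at z)) (at z)" if "z \<in> U" for z
    by (rule has_derivative_transform_within_open[OF cr_regular_has_derivative[OF F that] U that eq])
qed (simp_all add: cr_regular_CR[OF F] cr_regular_continuous_derivative[OF F])

lemma cr_regular_ccj: "cr_regular U (\<lambda>z. ccj (F z))"
  by (rule cr_regularI[where DF="\<lambda>z h. ccj (frechet_derivative F (at z) h)"])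
    (simp_all add: bounded_linear.has_derivative[OF bounded_linear_ccj] cr_regular_has_derivative[OF F]
      cr_regular_CR[OF F] ccj_imul bounded_linear.continuous_on[OF bounded_linear_ccj]
      cr_regular_continuous_derivative[OF F])

lemma cr_regular_cmul:
  assumes G: "cr_regular U G"
  shows "cr_regular U (\<lambda>z. cmul (F z) (G z))"
proof (rule cr_regularI)
  let ?DF = "\<lambda>z. frechet_derivative F (at z)" and ?DG = "\<lambda>z. frechet_derivative G (at z)"
  show "((\<lambda>z. cmul (F z) (G z)) has_derivative (\<lambda>h. cmul (F z) (?DG z h) + cmul (?DF z h) (G z))) (at z)"
    if "z \<in> U" for z
    by (rule bounded_bilinear.FDERIV[OF bounded_bilinear_cmul cr_regular_has_derivative[OF F that]
          cr_regular_has_derivative[OF G that]])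
  show "cmul (F z) (?DG z \<i>) + cmul (?DF z \<i>) (G z) = imul (cmul (F z) (?DG z 1) + cmul (?DF z 1) (G z))"
    if "z \<in> U" for z
    using that by (simp add: cr_regular_CR[OF F] cr_regular_CR[OF G] cmul_imul_left cmul_imul_right imul_add)
  show "continuous_on U (\<lambda>z. cmul (F z) (?DG z 1) + cmul (?DF z 1) (G z))"
    by (intro continuous_on_add bounded_bilinear.continuous_on[OF bounded_bilinear_cmul]
        cr_regular_continuous[OF F] cr_regular_continuous[OF G] cr_regular_continuous_derivative[OF F]
        cr_regular_continuous_derivative[OF G])
qed

end

lemma cr_regular_cong:
  assumes "open U" and eq: "\<And>z. z \<in> U \<Longrightarrow> F z = G z"
  shows "cr_regular U F \<longleftrightarrow> cr_regular U G"
proof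
  assume "cr_regular U F"
  thus "cr_regular U G" by (rule cr_regular_transform[OF _ assms])
next
  assume "cr_regular U G"
  thus "cr_regular U F" by (rule cr_regular_transform[OF _ assms(1)]) (simp add: eq)
qed

lemma cr_regular_cscalar_inverse:
  assumes R: "cr_regular U (\<lambda>z. cscalar (c z))" and c: "\<And>z. z \<in> U \<Longrightarrow> c z \<noteq> 0"
  shows "cr_regular U (\<lambda>z. cscalar (inverse (c z)))"
proof -
  define Dc where "Dc z h = to_complex (frechet_derivative (\<lambda>z. cscalar (c z)) (at z) h)" for z h
  define Di where "Di z h = - (inverse (c z) * Dc z h * inverse (c z))" for z h
  have "((\<lambda>w. to_complex (cscalar (c w))) has_derivative Dc z) (at z)" if "z \<in> U" for z
    unfolding Dc_def
    by (rule bounded_linear.has_derivative[OF bounded_linear_to_complex cr_regular_has_derivative[OF R that]])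
  hence c_deriv: "(c has_derivative Dc z) (at z)" if "z \<in> U" for z
    using that by simp
  have inv_deriv: "((\<lambda>w. inverse (c w)) has_derivative Di z) (at z)" if "z \<in> U" for z
    unfolding Di_def by (rule Deriv.has_derivative_inverse[OF c[OF that] c_deriv[OF that]])
  have deriv: "((\<lambda>w. cscalar (inverse (c w))) has_derivative (\<lambda>h. cscalar (Di z h))) (at z)"
    if "z \<in> U" for z
    by (rule bounded_linear.has_derivative[OF bounded_linear_cscalar inv_deriv[OF that]])
  have CR: "cscalar (Di z \<i>) = imul (cscalar (Di z 1))" if "z \<in> U" for z
    using cr_regular_CR[OF R that]
    by (simp add: Di_def Dc_def to_complex_imul cscalar_i_mult[symmetric] algebra_simps)
  have "continuous_on U (\<lambda>z. to_complex (cscalar (c z)))"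
    by (rule bounded_linear.continuous_on[OF bounded_linear_to_complex cr_regular_continuous[OF R]])
  hence "continuous_on U (\<lambda>z. inverse (c z))" using c by (intro continuous_on_inverse) simp_all
  moreover have "continuous_on U (\<lambda>z. Dc z 1)" unfolding Dc_def
    by (rule bounded_linear.continuous_on[OF bounded_linear_to_complex cr_regular_continuous_derivative[OF R]])
  ultimately have "continuous_on U (\<lambda>z. Di z 1)"
    unfolding Di_def by (intro continuous_on_minus continuous_on_mult)
  hence "continuous_on U (\<lambda>z. cscalar (Di z 1))"
    by (rule bounded_linear.continuous_on[OF bounded_linear_cscalar])
  with deriv CR show ?thesis by (rule cr_regularI)
qed

text \<open>The stem of \<open>N(f)\<^sup>-\<^sup>\<bullet> \<cdot> f\<^sup>c\<close>, where \<open>c\<close> is the complex scalar \<open>N(f)\<close>.\<close>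

lemma cr_regular_norm_inverse_ccj:
  assumes U: "open U" and F: "cr_regular U F"
    and c: "\<And>z. z \<in> U \<Longrightarrow> cmul (F z) (ccj (F z)) = cscalar (c z)" and c0: "\<And>z. z \<in> U \<Longrightarrow> c z \<noteq> 0"
  shows "cr_regular U (\<lambda>z. cmul (cscalar (inverse (c z))) (ccj (F z)))"
proof -
  have "cr_regular U (\<lambda>z. cscalar (c z))"
    using cr_regular_transform[OF cr_regular_cmul[OF F cr_regular_ccj[OF F]] U c] .
  from cr_regular_cscalar_inverse[OF this c0]
  show ?thesis by (rule cr_regular_cmul[OF _ cr_regular_ccj[OF F]])
qed


section \<open>Tame slice functions\<close>

definition stem_norm :: "complex set \<Rightarrow> ('a \<Rightarrow> 'a) \<Rightarrow> complex \<Rightarrow> complex" where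
  "stem_norm E g z = to_complex (cmul (St E g z) (ccj (St E g z)))"

lemma tame_stem_norm:
  assumes E: "cnj_closed E" and t: "tame (circ E) g" and z: "z \<in> E"
  shows "cmul (St E g z) (ccj (St E g z)) = cscalar (stem_norm E g z)"
    and "cmul (ccj (St E g z)) (St E g z) = cscalar (stem_norm E g z)"
    and "St E (sN (circ E) g) z = cscalar (stem_norm E g z)"
proof -
  have g: "g \<in> SF (circ E)" using t by (simp add: tame_def)
  have "fst (St E (sN (circ E) g) z) \<in> reals_A" "snd (St E (sN (circ E) g) z) \<in> reals_A"
    using t z unfolding tame_def slice_pres_def sdom_circ[OF E] by auto
  thus N: "cmul (St E g z) (ccj (St E g z)) = cscalar (stem_norm E g z)"
    unfolding stem_norm_def using real_pair_eq_cscalar St_sN[OF E g z] by metis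
  thus "St E (sN (circ E) g) z = cscalar (stem_norm E g z)" by (simp add: St_sN[OF E g z])
  have "St E (sN (circ E) g) z = St E (sN (circ E) (sconj (circ E) g)) z"
    using t by (simp add: tame_def)
  thus "cmul (ccj (St E g z)) (St E g z) = cscalar (stem_norm E g z)"
    using N St_sN[OF E g z] St_sN[OF E sconj_in_SF[OF E g] z] St_sconj[OF E g z] by simp
qed


lemma restr_sprod:
  assumes E': "cnj_closed E'" and E: "cnj_closed E" and sub: "E' \<subseteq> E"
    and f: "f \<in> SF (circ E)" and g: "g \<in> SF (circ E)"
  shows "restr (circ E') (sprod (circ E) f g) = sprod (circ E') (restr (circ E') f) (restr (circ E') g)"
proof (rule SF_eqI[OF E' restr_in_SF[OF E' E sub sprod_in_SF[OF E f g]]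
      sprod_in_SF[OF E' restr_in_SF[OF E' E sub f] restr_in_SF[OF E' E sub g]]])
  fix z assume z: "z \<in> E'"
  hence "z \<in> E" using sub by blast
  thus "St E' (restr (circ E') (sprod (circ E) f g)) z =
      St E' (sprod (circ E') (restr (circ E') f) (restr (circ E') g)) z"
    using z by (simp add: St_restr[OF E' E sub] sprod_in_SF[OF E] f g St_sprod[OF E] St_sprod[OF E']
        restr_in_SF[OF E' E sub])
qed

lemma
  assumes E': "cnj_closed E'" and E: "cnj_closed E" and sub: "E' \<subseteq> E" and t: "tame (circ E) g"
  shows tame_restr: "tame (circ E') (restr (circ E') g)"
    and stem_norm_restr: "z \<in> E' \<Longrightarrow> stem_norm E' (restr (circ E') g) z = stem_norm E g z"
proof -
  have g: "g \<in> SF (circ E)" using t by (simp add: tame_def)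
  note g' = restr_in_SF[OF E' E sub g] and St_g' = St_restr[OF E' E sub g]
  show norm: "stem_norm E' (restr (circ E') g) z = stem_norm E g z" if "z \<in> E'" for z
    using that by (simp add: stem_norm_def St_g')
  have N: "St E' (sN (circ E') (restr (circ E') g)) z = cscalar (stem_norm E g z)"
    and Nc: "St E' (sN (circ E') (sconj (circ E') (restr (circ E') g))) z = cscalar (stem_norm E g z)"
    if "z \<in> E'" for z
    using that sub tame_stem_norm[OF E t]
    by (auto simp: St_sN[OF E'] sconj_in_SF[OF E'] St_sconj[OF E'] g' St_g')
  have "slice_pres (circ E') (sN (circ E') (restr (circ E') g))"
    unfolding slice_pres_def sdom_circ[OF E'] using sN_in_SF[OF E' g'] N cscalar_in_reals_A by simp
  moreover have "sN (circ E') (restr (circ E') g) = sN (circ E') (sconj (circ E') (restr (circ E') g))"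
    by (rule SF_eqI[OF E' sN_in_SF[OF E' g'] sN_in_SF[OF E' sconj_in_SF[OF E' g']]]) (simp add: N Nc)
  ultimately show "tame (circ E') (restr (circ E') g)" using g' by (simp add: tame_def)
qed

text \<open>Norms of tame functions are central complex scalars, so the alternative-algebra
  identity \<open>(xy)(y\<^sup>c x\<^sup>c) = (x x\<^sup>c)(y y\<^sup>c)\<close> applies pointwise to the stems.\<close>

lemma tame_sprod:
  assumes E: "cnj_closed E" and tf: "tame (circ E) f" and tg: "tame (circ E) g"
    and nf: "\<And>z. z \<in> E \<Longrightarrow> stem_norm E f z \<noteq> 0" and ng: "\<And>z. z \<in> E \<Longrightarrow> stem_norm E g z \<noteq> 0"
  shows "tame (circ E) (sprod (circ E) f g)"
proof -
  have f: "f \<in> SF (circ E)" and g: "g \<in> SF (circ E)" using tf tg by (simp_all add: tame_def)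
  define h where "h = sprod (circ E) f g"
  have h: "h \<in> SF (circ E)" unfolding h_def by (rule sprod_in_SF[OF E f g])
  have St_h: "St E h z = cmul (St E f z) (St E g z)" if "z \<in> E" for z
    unfolding h_def by (rule St_sprod[OF E f g that])
  note Nf = tame_stem_norm[OF E tf] and Ng = tame_stem_norm[OF E tg]
  have N: "St E (sN (circ E) h) z = cscalar (stem_norm E f z * stem_norm E g z)"
    and Nc: "St E (sN (circ E) (sconj (circ E) h)) z = cscalar (stem_norm E f z * stem_norm E g z)"
    if z: "z \<in> E" for z
  proof -
    note inv_f = cscalar_inverse(1)[OF nf[OF z]] and inv_g = cscalar_inverse(1)[OF ng[OF z]]
    have "cmul (cmul (St E f z) (St E g z)) (cmul (ccj (St E g z)) (ccj (St E f z)))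
        = cscalar (stem_norm E f z * stem_norm E g z)"
      using C.norm_mult[OF Nf(1,2)[OF z] central_cscalar inv_f Ng(1,2)[OF z] central_cscalar inv_g]
      by (simp add: cscalar_mult)
    thus "St E (sN (circ E) h) z = cscalar (stem_norm E f z * stem_norm E g z)"
      using z by (simp add: St_sN[OF E h] St_h ccj_cmul)
    have "cmul (cmul (ccj (St E g z)) (ccj (St E f z))) (cmul (St E f z) (St E g z))
        = cscalar (stem_norm E f z * stem_norm E g z)"
      using C.norm_mult[OF Ng(2,1)[OF z] central_cscalar inv_g Nf(2,1)[OF z] central_cscalar inv_f]
      by (simp add: cscalar_mult mult.commute)
    thus "St E (sN (circ E) (sconj (circ E) h)) z = cscalar (stem_norm E f z * stem_norm E g z)"
      using z by (simp add: St_sN[OF E sconj_in_SF[OF E h]] St_sconj[OF E h] St_h ccj_cmul)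
  qed
  have "slice_pres (circ E) (sN (circ E) h)"
    unfolding slice_pres_def sdom_circ[OF E] using sN_in_SF[OF E h] N cscalar_in_reals_A by simp
  moreover have "sN (circ E) h = sN (circ E) (sconj (circ E) h)"
    by (rule SF_eqI[OF E sN_in_SF[OF E h] sN_in_SF[OF E sconj_in_SF[OF E h]]]) (simp add: N Nc)
  ultimately show ?thesis using h by (simp add: tame_def h_def)
qed

lemma central_cone_St:
  assumes E: "cnj_closed E"
    and g: "g \<in> central_cone (SF (circ E)) (sprod (circ E)) (sconj (circ E)) (sone (circ E)) g0"
    and "g \<noteq> g0" and z: "z \<in> E"
  obtains n' where "C.central (cmul (St E g z) (ccj (St E g z)))"
    and "cmul (ccj (St E g z)) (St E g z) = cmul (St E g z) (ccj (St E g z))"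
    and "cmul (cmul (St E g z) (ccj (St E g z))) n' = (one, 0)"
proof -
  let ?B = "SF (circ E)" and ?m = "sprod (circ E)" and ?c = "sconj (circ E)" and ?e = "sone (circ E)"
  have gS: "g \<in> ?B" and c1: "?m g (?c g) \<in> center ?B ?m" and i1: "invertible_in ?B ?m ?e (?m g (?c g))"
    and c2: "?m (?c g) (?c (?c g)) \<in> center ?B ?m" and i2: "invertible_in ?B ?m ?e (?m (?c g) (?c (?c g)))"
    using g \<open>g \<noteq> g0\<close> unfolding central_cone_def by blast+
  define G where "G = St E g z"
  have St1: "St E (?m g (?c g)) z = cmul G (ccj G)"
    using z by (simp add: G_def St_sprod St_sconj E gS sconj_in_SF)
  have St2: "St E (?m (?c g) (?c (?c g))) z = cmul (ccj G) G"
    using z by (simp add: G_def St_sprod St_sconj E gS sconj_in_SF)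
  have n1: "C.central (cmul G (ccj G))" and n2: "C.central (cmul (ccj G) G)"
    using central_St_of_center[OF E c1 z] central_St_of_center[OF E c2 z] St1 St2 by simp_all
  obtain n' where n': "cmul (cmul G (ccj G)) n' = (one, 0)"
    using St_right_inverse[OF E i1 z] St1 by metis
  obtain n2' where n2': "cmul (cmul (ccj G) G) n2' = (one, 0)"
    using St_right_inverse[OF E i2 z] St2 by metis
  have "cmul (ccj G) G = cmul G (ccj G)"
    using C.central_norms_eq[OF refl refl n1 n2 n' n2'] by simp
  thus ?thesis using that n1 n' unfolding G_def by blast
qed

lemma sprod_cscalar_stem:
  assumes E: "cnj_closed E" and h: "h \<in> SF (circ E)" and k: "k \<in> SF (circ E)"
    and St_k: "\<And>z. z \<in> E \<Longrightarrow> St E k z = cscalar (c z)"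
  shows "sprod (circ E) k h = (\<lambda>x. mul (k x) (h x))"
proof
  fix x
  show "sprod (circ E) k h x = mul (k x) (h x)"
  proof (cases "x \<in> circ E")
    case True
    then obtain z J where z: "z \<in> E" and J: "J \<in> sph" and x: "x = pt z J" by (rule circE)
    have "k x = pt (c z) J" using SF_pt[OF E k z J] St_k[OF z] x pt_cscalar by simp
    thus ?thesis
      using SF_pt[OF E sprod_in_SF[OF E k h] z J] SF_pt[OF E h z J] St_sprod[OF E k h z] St_k[OF z] x
        pt_mult[OF J]
      by simp
  next
    case False
    thus ?thesis using SF_outside[OF sprod_in_SF[OF E k h]] SF_outside[OF k] by (simp add: A.mult_lzero)
  qed
qed

end

locale tame_slice_function = slice_algebra mul cj one
  for mul :: "'a::euclidean_space \<Rightarrow> 'a \<Rightarrow> 'a" and cj one +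
  fixes D :: "complex set" and f :: "'a \<Rightarrow> 'a"
  assumes D_cnj: "\<forall>z\<in>D. cnj z \<in> D" and f_tame: "tame (circ D) f"
begin

abbreviation Ff :: "complex \<Rightarrow> 'a \<times> 'a" where "Ff \<equiv> St D f"
abbreviation norm_f :: "complex \<Rightarrow> complex" where "norm_f \<equiv> stem_norm D f"

definition D' :: "complex set" where "D' = {z \<in> D. norm_f z \<noteq> 0}"
definition f' :: "'a \<Rightarrow> 'a" where "f' = restr (circ D') f"
definition f_inv :: "'a \<Rightarrow> 'a" where
  "f_inv = induced (circ D') (\<lambda>z. cmul (cscalar (inverse (norm_f z))) (ccj (Ff z)))"

abbreviation "SF' \<equiv> SF (circ D')"
abbreviation "sprod' \<equiv> sprod (circ D')"
abbreviation "sconj' \<equiv> sconj (circ D')"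
abbreviation "sN' \<equiv> sN (circ D')"
abbreviation "sone' \<equiv> sone (circ D')"

lemma cnj_closed_D: "cnj_closed D"
  using D_cnj by (simp add: cnj_closed_def)

lemma f_in_SF: "f \<in> SF (circ D)"
  using f_tame by (simp add: tame_def)

lemma norm_Ff: "z \<in> D \<Longrightarrow> cmul (Ff z) (ccj (Ff z)) = cscalar (norm_f z)"
  and norm_ccj_Ff: "z \<in> D \<Longrightarrow> cmul (ccj (Ff z)) (Ff z) = cscalar (norm_f z)"
  and St_sN_f: "z \<in> D \<Longrightarrow> St D (sN (circ D) f) z = cscalar (norm_f z)"
  using tame_stem_norm[OF cnj_closed_D f_tame] by blast+

lemma circ_D': "circ D - zeros (circ D) (sN (circ D) f) = circ D'"
  unfolding D'_def by (rule circ_diff_zeros[OF cnj_closed_D sN_in_SF[OF cnj_closed_D f_in_SF] St_sN_f])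

lemma cnj_closed_D': "cnj_closed D'"
  unfolding D'_def by (rule cnj_closed_nonzero[OF cnj_closed_D sN_in_SF[OF cnj_closed_D f_in_SF] St_sN_f])

lemma D'_subset: "D' \<subseteq> D"
  by (auto simp: D'_def)

lemma norm_f_nonzero: "z \<in> D' \<Longrightarrow> norm_f z \<noteq> 0"
  by (simp add: D'_def)

lemma norm_f_inverse: "z \<in> D' \<Longrightarrow> cmul (cscalar (norm_f z)) (cscalar (inverse (norm_f z))) = (one, 0)"
  using cscalar_inverse norm_f_nonzero by blast

lemma norm_f': "z \<in> D' \<Longrightarrow> cmul (Ff z) (ccj (Ff z)) = cscalar (norm_f z)"
  and norm_ccj_f': "z \<in> D' \<Longrightarrow> cmul (ccj (Ff z)) (Ff z) = cscalar (norm_f z)"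
  using norm_Ff norm_ccj_Ff D'_subset by blast+

lemma f'_in_SF: "f' \<in> SF'"
  unfolding f'_def by (rule restr_in_SF[OF cnj_closed_D' cnj_closed_D D'_subset f_in_SF])

lemma St_f': "z \<in> D' \<Longrightarrow> St D' f' z = Ff z"
  unfolding f'_def by (rule St_restr[OF cnj_closed_D' cnj_closed_D D'_subset f_in_SF])

lemma norm_f_cnj: "z \<in> D \<Longrightarrow> norm_f (cnj z) = cnj (norm_f z)"
  by (rule cscalar_stem_cnj[OF cnj_closed_D sN_in_SF[OF cnj_closed_D f_in_SF] St_sN_f])

lemma stem_inverse_norm_f: "stem (circ D') (\<lambda>z. cscalar (inverse (norm_f z)))"
  using norm_f_cnj D'_subset
  by (intro stem_cscalar[OF cnj_closed_D']) (auto simp: complex_cnj_inverse)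

lemma stem_f_inv: "stem (circ D') (\<lambda>z. cmul (cscalar (inverse (norm_f z))) (ccj (Ff z)))"
proof -
  have "stem (circ D') Ff"
    using stem_stem_of[OF f_in_SF] D'_subset cnj_closed_D cnj_closed_D' by (auto simp: stem_circ_iff)
  thus ?thesis by (intro stem_cmul[OF cnj_closed_D'] stem_inverse_norm_f stem_ccj[OF cnj_closed_D'])
qed

lemma f_inv_in_SF: "f_inv \<in> SF'"
  unfolding f_inv_def by (rule induced_in_SF[OF stem_f_inv])

lemma St_f_inv: "z \<in> D' \<Longrightarrow> St D' f_inv z = cmul (cscalar (inverse (norm_f z))) (ccj (Ff z))"
  unfolding f_inv_def by (rule stem_of_induced[OF cnj_closed_D' stem_f_inv])

lemma St_N'_f': "z \<in> D' \<Longrightarrow> St D' (sN' f') z = cscalar (norm_f z)"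
  using St_sN[OF cnj_closed_D' f'_in_SF] St_f' norm_f' by simp

lemma St_N'_conj'_f': "z \<in> D' \<Longrightarrow> St D' (sN' (sconj' f')) z = cscalar (norm_f z)"
  using St_sN[OF cnj_closed_D' sconj_in_SF[OF cnj_closed_D' f'_in_SF]]
    St_sconj[OF cnj_closed_D' f'_in_SF] St_f' norm_ccj_f' by simp

lemma f'_in_central_cone: "f' \<in> central_cone SF' sprod' sconj' sone' (\<lambda>x. 0)"
proof -
  note N = sN_in_SF[OF cnj_closed_D' f'_in_SF]
    and Nc = sN_in_SF[OF cnj_closed_D' sconj_in_SF[OF cnj_closed_D' f'_in_SF]]
  show ?thesis
    using f'_in_SF cscalar_stem_in_center[OF cnj_closed_D' N St_N'_f']
      cscalar_stem_invertible[OF cnj_closed_D' N St_N'_f' norm_f_nonzero]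
      cscalar_stem_in_center[OF cnj_closed_D' Nc St_N'_conj'_f']
      cscalar_stem_invertible[OF cnj_closed_D' Nc St_N'_conj'_f' norm_f_nonzero]
    unfolding central_cone_def sN_def by blast
qed

lemma St_f'_f_inv:
  assumes z: "z \<in> D'"
  shows "cmul (St D' f' z) (St D' f_inv z) = (one, 0)" and "cmul (St D' f_inv z) (St D' f' z) = (one, 0)"
proof -
  note c = central_cscalar[of "inverse (norm_f z)"]
  have "cmul (Ff z) (cmul (cscalar (inverse (norm_f z))) (ccj (Ff z)))
      = cmul (cscalar (inverse (norm_f z))) (cscalar (norm_f z))"
    using C.central_mid_assoc[OF c] norm_f'[OF z] by simp
  thus "cmul (St D' f' z) (St D' f_inv z) = (one, 0)"
    using norm_f_nonzero[OF z] St_f'[OF z] St_f_inv[OF z] by (simp add: cscalar_inverse)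
  have "cmul (cmul (cscalar (inverse (norm_f z))) (ccj (Ff z))) (Ff z)
      = cmul (cscalar (inverse (norm_f z))) (cscalar (norm_f z))"
    using C.central_left_assoc[OF c] norm_ccj_f'[OF z] by simp
  thus "cmul (St D' f_inv z) (St D' f' z) = (one, 0)"
    using norm_f_nonzero[OF z] St_f'[OF z] St_f_inv[OF z] by (simp add: cscalar_inverse)
qed

lemma f'_invertible: "invertible_in SF' sprod' sone' f'"
  by (rule invertible_inI[OF cnj_closed_D' f'_in_SF f_inv_in_SF St_f'_f_inv])

lemma inverse_f': "inverse_in SF' sprod' sone' f' = f_inv"
  by (rule inverse_in_eqI[OF cnj_closed_D' f'_in_SF f_inv_in_SF St_f'_f_inv])

lemma f_inv_eq_inverse_N'_conj': "f_inv = sprod' (inverse_in SF' sprod' sone' (sN' f')) (sconj' f')"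
proof -
  have "inverse_in SF' sprod' sone' (sN' f') = induced (circ D') (\<lambda>z. cscalar (inverse (norm_f z)))"
    by (rule cscalar_stem_inverse[OF cnj_closed_D' sN_in_SF[OF cnj_closed_D' f'_in_SF] St_N'_f'
          norm_f_nonzero])
  moreover note g = induced_in_SF[OF stem_inverse_norm_f]
  have "f_inv = sprod' (induced (circ D') (\<lambda>z. cscalar (inverse (norm_f z)))) (sconj' f')"
    by (rule SF_eqI[OF cnj_closed_D' f_inv_in_SF sprod_in_SF[OF cnj_closed_D' g sconj_in_SF[OF cnj_closed_D' f'_in_SF]]])
      (simp add: St_f_inv St_sprod[OF cnj_closed_D' g sconj_in_SF[OF cnj_closed_D' f'_in_SF]]
        stem_of_induced[OF cnj_closed_D' stem_inverse_norm_f] St_sconj[OF cnj_closed_D' f'_in_SF] St_f')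
  ultimately show ?thesis by simp
qed

lemma f_inv_pt: "x \<in> circ D' \<Longrightarrow> f_inv x = mul (ainv (sN (circ D) f x)) (sconj (circ D) f x)"
proof -
  assume "x \<in> circ D'"
  then obtain z J where z: "z \<in> D'" and J: "J \<in> sph" and x: "x = pt z J" by (rule circE)
  have zD: "z \<in> D" using z D'_subset by blast
  have "sN (circ D) f x = pt (norm_f z) J"
    using SF_pt[OF cnj_closed_D sN_in_SF[OF cnj_closed_D f_in_SF] zD J] St_sN_f[OF zD] x pt_cscalar by simp
  hence "ainv (sN (circ D) f x) = pt (inverse (norm_f z)) J"
    using ainv_pt[OF J norm_f_nonzero[OF z]] by simp
  moreover have "sconj (circ D) f x = fst (ccj (Ff z)) + mul J (snd (ccj (Ff z)))"
    using SF_pt[OF cnj_closed_D sconj_in_SF[OF cnj_closed_D f_in_SF] zD J]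
      St_sconj[OF cnj_closed_D f_in_SF zD] x by simp
  moreover have "f_inv x = fst (cmul (cscalar (inverse (norm_f z))) (ccj (Ff z)))
      + mul J (snd (cmul (cscalar (inverse (norm_f z))) (ccj (Ff z))))"
    using SF_pt[OF cnj_closed_D' f_inv_in_SF z J] St_f_inv[OF z] x by simp
  ultimately show ?thesis using pt_mult[OF J] by simp
qed

lemma norm_stem_f_inv:
  assumes z: "z \<in> D'"
  defines "G \<equiv> cmul (cscalar (inverse (norm_f z))) (ccj (Ff z))"
  shows "cmul G (ccj G) = cscalar (inverse (norm_f z))"
proof -
  let ?s = "cscalar (inverse (norm_f z))"
  note c = central_cscalar[of "inverse (norm_f z)"]
  have "cmul G (ccj G) = cmul (cmul ?s (ccj (Ff z))) (cmul (Ff z) ?s)"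
    by (simp add: G_def ccj_cmul)
  also have "\<dots> = cmul ?s (cmul (ccj (Ff z)) (cmul (Ff z) ?s))"
    by (rule C.central_left_assoc[OF c])
  also have "cmul (ccj (Ff z)) (cmul (Ff z) ?s) = cmul ?s (cscalar (norm_f z))"
    using C.central_right_assoc[OF c] norm_ccj_f'[OF z] by simp
  also have "cmul ?s (cmul ?s (cscalar (norm_f z))) = ?s"
    using norm_f_nonzero[OF z] by (simp add: cscalar_mult)
  finally show ?thesis .
qed

lemma Ff_from_stem_f_inv:
  assumes z: "z \<in> D'"
  defines "G \<equiv> cmul (cscalar (inverse (norm_f z))) (ccj (Ff z))"
  shows "cmul (cscalar (inverse (inverse (norm_f z)))) (ccj G) = Ff z"
proof -
  let ?s = "cscalar (inverse (norm_f z))"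
  have "cmul (cscalar (inverse (inverse (norm_f z)))) (ccj G) = cmul (cscalar (norm_f z)) (cmul (Ff z) ?s)"
    by (simp add: G_def ccj_cmul)
  also have "\<dots> = cmul (cscalar (norm_f z)) (cmul ?s (Ff z))"
    by (simp add: C.central_commute[OF central_cscalar])
  also have "\<dots> = cmul (cmul (cscalar (norm_f z)) ?s) (Ff z)"
    by (rule C.central_left_assoc[OF central_cscalar, symmetric])
  also have "\<dots> = Ff z" using norm_f_inverse[OF z] by (simp add: C.unit_left)
  finally show ?thesis .
qed

text \<open>For the converse direction, \<open>f\<close> is recovered from \<open>f\<^sup>-\<^sup>\<bullet>\<close> by the same construction, since
  \<open>N(f\<^sup>-\<^sup>\<bullet>) = N(f)\<^sup>-\<^sup>\<bullet>\<close>.\<close>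

lemma slice_regular_f_inv_iff:
  assumes "open (circ D')"
  shows "slice_regular (circ D') f_inv \<longleftrightarrow> slice_regular (circ D') f'"
proof -
  define G where "G z = cmul (cscalar (inverse (norm_f z))) (ccj (Ff z))" for z
  have U: "open D'" using open_sdom[OF assms] sdom_circ[OF cnj_closed_D'] by simp
  have "slice_regular (circ D') f_inv \<longleftrightarrow> cr_regular D' G"
    using slice_regular_iff_cr_regular[OF cnj_closed_D' f_inv_in_SF]
      cr_regular_cong[OF U, of "St D' f_inv" G] St_f_inv
    by (simp add: G_def)
  moreover have "slice_regular (circ D') f' \<longleftrightarrow> cr_regular D' Ff"
    using slice_regular_iff_cr_regular[OF cnj_closed_D' f'_in_SF] cr_regular_cong[OF U, of "St D' f'" Ff]
      St_f'
    by simp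
  moreover have "cr_regular D' G \<longleftrightarrow> cr_regular D' Ff"
  proof
    assume "cr_regular D' G"
    from cr_regular_norm_inverse_ccj[OF U this norm_stem_f_inv[folded G_def]] norm_f_nonzero
    have "cr_regular D' (\<lambda>z. cmul (cscalar (inverse (inverse (norm_f z)))) (ccj (G z)))" by simp
    thus "cr_regular D' Ff" using cr_regular_cong[OF U Ff_from_stem_f_inv[folded G_def]] by simp
  next
    assume "cr_regular D' Ff"
    thus "cr_regular D' G"
      unfolding G_def by (rule cr_regular_norm_inverse_ccj[OF U _ norm_f' norm_f_nonzero])
  qed
  ultimately show ?thesis by simp
qed

lemma assoc_f'_conj': "g \<in> SF' \<Longrightarrow> sprod' (sprod' f' (sconj' f')) g = sprod' f' (sprod' (sconj' f') g)"
proof -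
  assume g: "g \<in> SF'"
  note E = cnj_closed_D' and c = sconj_in_SF[OF cnj_closed_D' f'_in_SF]
  show ?thesis
  proof (rule SF_eqI[OF E sprod_in_SF[OF E sprod_in_SF[OF E f'_in_SF c] g] sprod_in_SF[OF E f'_in_SF sprod_in_SF[OF E c g]]])
    fix z assume z: "z \<in> D'"
    have "assoc cmul (Ff z) (ccj (Ff z)) (St D' g z) = 0"
      by (rule C.assoc_central_norm[OF norm_f'[OF z] norm_ccj_f'[OF z] central_cscalar norm_f_inverse[OF z]])
    thus "St D' (sprod' (sprod' f' (sconj' f')) g) z = St D' (sprod' f' (sprod' (sconj' f') g)) z"
      using z by (simp add: St_sprod sprod_in_SF St_sconj E f'_in_SF c g St_f' assoc_def)
  qed
qed

lemma norm_sprod_stem: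
  assumes g: "g \<in> central_cone SF' sprod' sconj' sone' (\<lambda>x. 0)" and z: "z \<in> D'"
  defines "G \<equiv> St D' g z"
  shows "cmul (cmul (Ff z) G) (cmul (ccj G) (ccj (Ff z))) = cmul (cscalar (norm_f z)) (cmul G (ccj G))"
    and "cmul (cmul G (Ff z)) (cmul (ccj (Ff z)) (ccj G)) = cmul (cmul G (ccj G)) (cscalar (norm_f z))"
proof -
  consider (zero) "G = 0"
    | (invertible) n' where "C.central (cmul G (ccj G))" "cmul (ccj G) G = cmul G (ccj G)"
      "cmul (cmul G (ccj G)) n' = (one, 0)"
  proof (cases "g = (\<lambda>x. 0)")
    case True
    thus ?thesis using that(1) z by (simp add: G_def St_zero[OF cnj_closed_D'])
  next
    case False
    thus ?thesis using that(2) central_cone_St[OF cnj_closed_D' g _ z] unfolding G_def by metis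
  qed
  note G_cases = this and f = norm_f'[OF z] norm_ccj_f'[OF z] central_cscalar norm_f_inverse[OF z]
  show "cmul (cmul (Ff z) G) (cmul (ccj G) (ccj (Ff z))) = cmul (cscalar (norm_f z)) (cmul G (ccj G))"
    using G_cases
  proof cases
    case invertible
    thus ?thesis by (intro C.norm_mult[OF f refl])
  qed (simp add: C.mult_lzero C.mult_rzero linear_0[OF linear_ccj])
  show "cmul (cmul G (Ff z)) (cmul (ccj (Ff z)) (ccj G)) = cmul (cmul G (ccj G)) (cscalar (norm_f z))"
    using G_cases
  proof cases
    case invertible
    thus ?thesis by (intro C.norm_mult[OF refl _ _ _ f])
  qed (simp add: C.mult_lzero C.mult_rzero linear_0[OF linear_ccj])
qed

lemma sN'_sprod_f':
  assumes g: "g \<in> central_cone SF' sprod' sconj' sone' (\<lambda>x. 0)"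
  shows "sN' (sprod' f' g) = (\<lambda>x. mul (sN' f' x) (sN' g x))"
    and "(\<lambda>x. mul (sN' f' x) (sN' g x)) = sprod' (sN' g) (sN' f')"
    and "sprod' (sN' g) (sN' f') = sN' (sprod' g f')"
proof -
  note E = cnj_closed_D' and norms = norm_sprod_stem[OF g]
  have gS: "g \<in> SF'" using g zero_in_SF[OF E] by (auto simp: central_cone_def)
  note N_f' = sN_in_SF[OF E f'_in_SF] and N_g = sN_in_SF[OF E gS]
    and fg = sprod_in_SF[OF E f'_in_SF gS] and gf = sprod_in_SF[OF E gS f'_in_SF]
  have N_fg: "sN' (sprod' f' g) = sprod' (sN' f') (sN' g)"
    by (rule SF_eqI[OF E sN_in_SF[OF E fg] sprod_in_SF[OF E N_f' N_g]])
      (use norms in \<open>simp add: St_sN[OF E fg] St_sprod[OF E f'_in_SF gS] St_f' ccj_cmul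
        St_sprod[OF E N_f' N_g] St_N'_f' St_sN[OF E gS]\<close>)
  have comm: "sprod' (sN' f') (sN' g) = sprod' (sN' g) (sN' f')"
    by (rule SF_eqI[OF E sprod_in_SF[OF E N_f' N_g] sprod_in_SF[OF E N_g N_f']])
      (simp add: St_sprod[OF E N_f' N_g] St_sprod[OF E N_g N_f'] St_N'_f' C.central_commute[OF central_cscalar])
  have N_gf: "sprod' (sN' g) (sN' f') = sN' (sprod' g f')"
    by (rule SF_eqI[OF E sprod_in_SF[OF E N_g N_f'] sN_in_SF[OF E gf]])
      (use norms in \<open>simp add: St_sN[OF E gf] St_sprod[OF E gS f'_in_SF] St_f' ccj_cmul
        St_sprod[OF E N_g N_f'] St_N'_f' St_sN[OF E gS]\<close>)
  have "sprod' (sN' f') (sN' g) = (\<lambda>x. mul (sN' f' x) (sN' g x))"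
    by (rule sprod_cscalar_stem[OF E N_g N_f' St_N'_f'])
  thus "sN' (sprod' f' g) = (\<lambda>x. mul (sN' f' x) (sN' g x))"
    and "(\<lambda>x. mul (sN' f' x) (sN' g x)) = sprod' (sN' g) (sN' f')"
    and "sprod' (sN' g) (sN' f') = sN' (sprod' g f')"
    using N_fg comm N_gf by simp_all
qed

lemma tame_f': "tame (circ D') f'"
  unfolding f'_def by (rule tame_restr[OF cnj_closed_D' cnj_closed_D D'_subset f_tame])

lemma tame_sprod_f':
  assumes g: "tame (circ D') g"
  defines "\<Omega>'' \<equiv> circ D' - zeros (circ D') (sN' g)"
  shows "tame \<Omega>'' (restr \<Omega>'' (sprod' f' g))"
proof -
  note E' = cnj_closed_D' and gS = g[unfolded tame_def, THEN conjunct1]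
  define D'' where "D'' = {z \<in> D'. stem_norm D' g z \<noteq> 0}"
  note St_N_g = tame_stem_norm(3)[OF E' g]
  have \<Omega>'': "\<Omega>'' = circ D''"
    unfolding \<Omega>''_def D''_def by (rule circ_diff_zeros[OF E' sN_in_SF[OF E' gS] St_N_g])
  have E'': "cnj_closed D''"
    unfolding D''_def by (rule cnj_closed_nonzero[OF E' sN_in_SF[OF E' gS] St_N_g])
  have sub: "D'' \<subseteq> D'" by (auto simp: D''_def)
  have "tame (circ D'') (sprod (circ D'') (restr (circ D'') f') (restr (circ D'') g))"
  proof (rule tame_sprod[OF E'' tame_restr[OF E'' E' sub tame_f'] tame_restr[OF E'' E' sub g]])
    fix z assume z: "z \<in> D''"
    hence "z \<in> D'" using sub by blast
    thus "stem_norm D'' (restr (circ D'') f') z \<noteq> 0"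
      using z stem_norm_restr[OF E'' E' sub tame_f'] stem_norm_restr[OF E' cnj_closed_D D'_subset f_tame]
        norm_f_nonzero
      by (simp add: f'_def)
    show "stem_norm D'' (restr (circ D'') g) z \<noteq> 0"
      using z stem_norm_restr[OF E'' E' sub g] by (simp add: D''_def)
  qed
  thus ?thesis unfolding \<Omega>'' by (simp add: restr_sprod[OF E'' E' sub f'_in_SF gS])
qed

end

theorem proposition2p4:
  fixes mul :: "'a::euclidean_space \<Rightarrow> 'a \<Rightarrow> 'a" and cj :: "'a \<Rightarrow> 'a" and one :: 'a
    and D :: "complex set" and f :: "'a \<Rightarrow> 'a"
  assumes alg: "alt_star_alg mul cj one"
    and sph_ne: "salg.sph mul cj one \<noteq> {}"
    and D_ne: "D \<noteq> {}"
    and D_conj: "\<forall>z\<in>D. cnj z \<in> D"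
    and f_tame: "salg.tame mul cj one (salg.circ mul cj one D) f"
    and nonempty: "salg.circ mul cj one D -
        salg.zeros (salg.circ mul cj one D) (salg.sN mul cj one (salg.circ mul cj one D) f) \<noteq> {}"
  shows "let \<Omega> = salg.circ mul cj one D;
             \<Omega>' = \<Omega> - salg.zeros \<Omega> (salg.sN mul cj one \<Omega> f);
             f' = salg.restr \<Omega>' f;
             B = salg.SF mul cj one \<Omega>';
             prod = salg.sprod mul cj one \<Omega>';
             conj = salg.sconj mul cj one \<Omega>';
             e = salg.sone mul cj one \<Omega>';
             N = salg.sN mul cj one \<Omega>';
             finv = inverse_in B prod e f'
         in f' \<in> central_cone B prod conj e (\<lambda>x. 0)
          \<and> invertible_in B prod e f'
          \<and> finv = prod (inverse_in B prod e (N f')) (conj f')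
          \<and> (\<forall>x\<in>\<Omega>'. finv x = mul (salg.ainv mul one (salg.sN mul cj one \<Omega> f x))
                                    (salg.sconj mul cj one \<Omega> f x))
          \<and> (open \<Omega>' \<longrightarrow>
               (salg.slice_regular mul cj one \<Omega>' finv \<longleftrightarrow> salg.slice_regular mul cj one \<Omega>' f'))
          \<and> (\<forall>g\<in>B. prod (prod f' (conj f')) g = prod f' (prod (conj f') g))
          \<and> (\<forall>g\<in>central_cone B prod conj e (\<lambda>x. 0).
               N (prod f' g) = (\<lambda>x. mul (N f' x) (N g x))
             \<and> (\<lambda>x. mul (N f' x) (N g x)) = prod (N g) (N f')
             \<and> prod (N g) (N f') = N (prod g f'))
          \<and> (\<forall>g. salg.tame mul cj one \<Omega>' g \<longrightarrow>
               (let \<Omega>'' = \<Omega>' - salg.zeros \<Omega>' (N g)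
                in \<Omega>'' \<noteq> {} \<longrightarrow> salg.tame mul cj one \<Omega>'' (salg.restr \<Omega>'' (prod f' g))))"
proof -
  interpret tame_slice_function mul cj one D f
    by unfold_locales (use alg sph_ne D_conj f_tame in auto)
  show ?thesis
    unfolding Let_def circ_D' f'_def[symmetric] inverse_f'
    using f'_in_central_cone f'_invertible f_inv_eq_inverse_N'_conj' f_inv_pt
      slice_regular_f_inv_iff assoc_f'_conj' sN'_sprod_f' tame_sprod_f'
    by blast
qed

end
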